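(* Let $\rho$ be a probability measure on $\mathbb R$ with $\int\log(1+x^2)\rho(\mathrm dx)<+\infty$. For each $N\ge1$ let $a_1^{(N)}<\dots<a_N^{(N)}$ be real numbers and $\rho_N=\frac1N\sum_{j=1}^N\delta_{a_j^{(N)}}$, and assume there exists $\eta\in(0,1)$ with $d_{W_\eta}(\rho_N,\rho)\to0$ as $N\to\infty$. Let $(\beta_N)$ be positive with $\beta_N=o(1/N)$, i.e. $c_N:=N\beta_N/2\to0^+$. Let $\rho_N^{(c_N)}$ be the law of the random mean of the Dirichlet process $D_{c_N\rho_N}$. Then $\rho_N^{(c_N)}\to\rho$ weakly as $N\to\infty$.
   Context: For $0<\eta<1$, $d_{W_\eta}(\mu,\nu)=\sup_{h\in\mathcal H_\eta}|\int h\,\mathrm d\mu-\int h\,\mathrm d\nu|$ where $\mathcal H_\eta$ is the set of $h:\mathbb R\to\mathbb R$ with $|h(x)-h(y)|\le\min\{|x-y|,|x-y|^\eta\}$ for all $x,y$. Dirichlet process: for a probability measure $\mu$ and $c>0$, $D_{c\mu}$ is the random probability measure such that for every finite measurable partition $A_1,\dots,A_k$ of $\mathbb R$, $(D_{c\mu}(A_1),\dots,D_{c\mu}(A_k))\sim\mathrm{Dir}_{(c\mu(A_1),\dots,c\mu(A_k))}$; its random mean is $\int x\,D_{c\mu}(\mathrm dx)$. *)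

theory Defs
  imports "HOL-Probability.Probability"
begin

definition gamma_density :: "real \<Rightarrow> real \<Rightarrow> real" where
  "gamma_density a x = (if x > 0 then x powr (a - 1) * exp (- x) / Gamma a else 0)"

definition gamma_measure :: "real \<Rightarrow> real measure" where
  "gamma_measure a = (if a > 0 then density lborel (\<lambda>x. ennreal (gamma_density a x))
                      else return borel 0)"

(* Dirichlet distribution Dir_(alpha 0, ..., alpha (k-1)) on vectors indexed by {..<k}:
   law of (G_i / sum_j G_j)_i with G_i independent Gamma(alpha i, 1)
   (components with alpha i = 0 are identically 0). *)
definition dirichlet :: "nat \<Rightarrow> (nat \<Rightarrow> real) \<Rightarrow> (nat \<Rightarrow> real) measure" where
  "dirichlet k \<alpha> =
     distr (PiM {..<k} (\<lambda>i. gamma_measure (\<alpha> i))) (PiM {..<k} (\<lambda>_. borel))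
       (\<lambda>g. restrict (\<lambda>i. g i / (\<Sum>j<k. g j)) {..<k})"

definition dirichlet_process ::
  "'a measure \<Rightarrow> ('a \<Rightarrow> real measure) \<Rightarrow> real \<Rightarrow> real measure \<Rightarrow> bool" where
  "dirichlet_process M D c \<mu> \<longleftrightarrow>
     prob_space M \<and> D \<in> measurable M (subprob_algebra borel) \<and>
     (\<forall>\<omega>\<in>space M. prob_space (D \<omega>)) \<and>
     (\<forall>k (A :: nat \<Rightarrow> real set).
        (\<forall>i<k. A i \<in> sets borel) \<and> disjoint_family_on A {..<k} \<and> (\<Union>i<k. A i) = UNIV \<longrightarrow>
        distr M (PiM {..<k} (\<lambda>_. borel)) (\<lambda>\<omega>. restrict (\<lambda>i. measure (D \<omega>) (A i)) {..<k})
          = dirichlet k (\<lambda>i. c * measure \<mu> (A i)))"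

definition random_mean_law :: "'a measure \<Rightarrow> ('a \<Rightarrow> real measure) \<Rightarrow> real measure" where
  "random_mean_law M D = distr M borel (\<lambda>\<omega>. \<integral>x. x \<partial>(D \<omega>))"

definition H_eta :: "real \<Rightarrow> (real \<Rightarrow> real) set" where
  "H_eta \<eta> = {h. \<forall>x y. \<bar>h x - h y\<bar> \<le> min \<bar>x - y\<bar> (\<bar>x - y\<bar> powr \<eta>)}"

definition dW :: "real \<Rightarrow> real measure \<Rightarrow> real measure \<Rightarrow> ereal" where
  "dW \<eta> \<mu> \<nu> = (if \<forall>h\<in>H_eta \<eta>. integrable \<mu> h \<and> integrable \<nu> h
                 then (SUP h\<in>H_eta \<eta>. ereal \<bar>(\<integral>x. h x \<partial>\<mu>) - (\<integral>x. h x \<partial>\<nu>)\<bar>)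
                 else \<infinity>)"

definition empirical :: "nat \<Rightarrow> (nat \<Rightarrow> real) \<Rightarrow> real measure" where
  "empirical N a = distr (measure_pmf (pmf_of_set {1..N})) borel a"

end

theory Submission
  imports Defs
begin

text \<open>
  On the finite support of \<open>\<rho>\<^sub>N\<close> the Dirichlet process is a random probability vector of weights
  \<open>w\<^sub>j\<close> at the atoms \<open>a\<^sub>j\<close>, and each \<open>w\<^sub>j\<close> is Beta\<open>(c/N, c - c/N)\<close>-distributed, with \<open>c = c\<^sub>N\<close>. Hence
  \<open>E w\<^sub>j = 1/N\<close>, \<open>E w\<^sub>j(1 - w\<^sub>j) = O(c/N)\<close> and \<open>E w\<^sub>j\<^sup>\<eta> = O(1/N)\<close>, the last one uniformly as \<open>c \<rightarrow> 0\<close>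
  because \<open>\<Gamma>(s + \<eta>)/\<Gamma>(s) = O(s)\<close> as \<open>s \<rightarrow> 0\<close>.

  For a bounded Lipschitz \<open>\<phi>\<close>, compare \<open>\<phi>(\<Sum>\<^sub>j a\<^sub>j w\<^sub>j)\<close> with \<open>\<Sum>\<^sub>j w\<^sub>j \<phi>(a\<^sub>j)\<close>, whose expectation is
  \<open>\<integral>\<phi> d\<rho>\<^sub>N\<close>: atoms with \<open>|a\<^sub>j| \<le> R\<close> contribute \<open>O(L R w\<^sub>j(1 - w\<^sub>j))\<close>, and the remaining ones
  \<open>O(w\<^sub>j\<^sup>\<eta> |a\<^sub>j|\<^sup>\<eta> + w\<^sub>j)\<close>. Taking expectations, \<open>E \<phi>(\<Sum>\<^sub>j a\<^sub>j w\<^sub>j)\<close> differs from \<open>\<integral>\<phi> d\<rho>\<^sub>N\<close> by at most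
  a constant times \<open>\<integral>\<^bsub>|x|>R\<^esub> (1 + |x|\<^sup>\<eta>) d\<rho>\<^sub>N\<close> plus \<open>O(R c\<^sub>N)\<close>. The tail integral is controlled uniformly in \<open>N\<close>
  by testing the \<open>d\<^sub>W\<^sub>\<eta>\<close>-convergence against \<open>max 0 ((1 + |x|)\<^sup>\<eta> - (1 + r)\<^sup>\<eta>) \<in> H\<^sub>\<eta>\<close>, and \<open>c\<^sub>N \<rightarrow> 0\<close>
  removes the second term. Convergence against the piecewise linear functions \<open>cts_step\<close> gives weak
  convergence.
\<close>

section \<open>Gamma integrals\<close>

lemma nn_integral_gamma_kernel:
  fixes s l :: real
  assumes s: "s > 0" and l: "l > 0"
  shows "(\<integral>\<^sup>+y. ennreal (indicator {0<..} y * y powr (s - 1) * exp (- (l * y))) \<partial>lborel)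
       = ennreal (Gamma s / l powr s)"
proof -
  let ?F = "\<lambda>t::real. ennreal (indicator {0..} t * t powr (s - 1) / exp t)"
  define I where "I = (\<integral>\<^sup>+y. ennreal (indicator {0<..} y * y powr (s - 1) * exp (- (l * y))) \<partial>lborel)"
  have "ennreal (Gamma s) = (\<integral>\<^sup>+t. ?F t \<partial>lborel)"
    using Gamma_conv_nn_integral_real[OF s] by simp
  also have "\<dots> = ennreal l * (\<integral>\<^sup>+y. ?F (0 + l * y) \<partial>lborel)"
    using l by (subst nn_integral_real_affine[of _ l 0]) auto
  also have "(\<integral>\<^sup>+y. ?F (0 + l * y) \<partial>lborel)
      = (\<integral>\<^sup>+y. ennreal (l powr (s - 1)) * ennreal (indicator {0<..} y * y powr (s - 1) * exp (- (l * y))) \<partial>lborel)"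
  proof (intro nn_integral_cong)
    fix y :: real
    show "?F (0 + l * y) = ennreal (l powr (s - 1)) * ennreal (indicator {0<..} y * y powr (s - 1) * exp (- (l * y)))"
      using l by (cases "y > 0")
        (auto simp: ennreal_mult'[symmetric] powr_mult exp_minus field_simps indicator_def zero_le_mult_iff)
  qed
  also have "\<dots> = ennreal (l powr (s - 1)) * I"
    unfolding I_def by (subst nn_integral_cmult) auto
  finally have "ennreal (Gamma s) = ennreal (l * l powr (s - 1)) * I"
    using l by (simp add: ennreal_mult' mult.assoc)
  moreover have "l * l powr (s - 1) = l powr s"
    using l by (simp add: powr_diff)
  ultimately have Gamma_eq: "ennreal (Gamma s) = ennreal (l powr s) * I"
    by simp
  have "I = ennreal (l powr s) * I / ennreal (l powr s)"
    using l by (simp add: ennreal_mult_divide_eq mult.commute)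
  also have "\<dots> = ennreal (Gamma s / l powr s)"
    using l Gamma_real_pos[OF s] by (simp add: Gamma_eq[symmetric] divide_ennreal)
  finally show ?thesis
    unfolding I_def .
qed

lemma nn_integral_gamma_kernel_cmult:
  fixes s l C :: real
  assumes s: "s > 0" and l: "l > 0" and C: "C \<ge> 0"
  shows "(\<integral>\<^sup>+y. ennreal (C * (indicator {0<..} y * y powr (s - 1) * exp (- (l * y)))) \<partial>lborel)
       = ennreal (C * Gamma s / l powr s)"
proof -
  have "(\<integral>\<^sup>+y. ennreal (C * (indicator {0<..} y * y powr (s - 1) * exp (- (l * y)))) \<partial>lborel)
      = (\<integral>\<^sup>+y. ennreal C * ennreal (indicator {0<..} y * y powr (s - 1) * exp (- (l * y))) \<partial>lborel)"
    using C by (intro nn_integral_cong) (simp add: ennreal_mult)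
  also have "\<dots> = ennreal C * ennreal (Gamma s / l powr s)"
    by (subst nn_integral_cmult) (auto simp: nn_integral_gamma_kernel[OF s l])
  finally show ?thesis
    using C s l Gamma_real_pos[OF s] by (simp add: ennreal_mult[symmetric])
qed

lemma gamma_density_measurable [measurable]: "gamma_density a \<in> borel_measurable borel"
  unfolding gamma_density_def by measurable

lemma gamma_density_nonneg: "a > 0 \<Longrightarrow> gamma_density a x \<ge> 0"
  by (simp add: gamma_density_def Gamma_real_pos)

lemma nn_integral_gamma_density_powr_exp:
  fixes a p t :: real
  assumes a: "a > 0" and p: "p \<ge> 0" and t: "t \<ge> 0"
  shows "(\<integral>\<^sup>+x. ennreal (gamma_density a x * x powr p * exp (- (t * x))) \<partial>lborel)
       = ennreal (Gamma (a + p) / (Gamma a * (1 + t) powr (a + p)))"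
proof -
  have "(\<integral>\<^sup>+x. ennreal (gamma_density a x * x powr p * exp (- (t * x))) \<partial>lborel)
      = (\<integral>\<^sup>+x. ennreal (1 / Gamma a * (indicator {0<..} x * x powr (a + p - 1) * exp (- ((1 + t) * x)))) \<partial>lborel)"
  proof (intro nn_integral_cong)
    fix x :: real
    have "x > 0 \<Longrightarrow> x powr (a - 1) * exp (- x) * x powr p * exp (- (t * x))
        = x powr (a + p - 1) * exp (- ((1 + t) * x))"
      by (simp add: powr_add[symmetric] exp_add[symmetric] algebra_simps)
    then show "ennreal (gamma_density a x * x powr p * exp (- (t * x)))
        = ennreal (1 / Gamma a * (indicator {0<..} x * x powr (a + p - 1) * exp (- ((1 + t) * x))))"
      by (auto simp: gamma_density_def indicator_def)
  qed
  also have "\<dots> = ennreal (1 / Gamma a * Gamma (a + p) / (1 + t) powr (a + p))"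
    using a p t Gamma_real_pos[OF a] by (intro nn_integral_gamma_kernel_cmult) auto
  finally show ?thesis
    by simp
qed

lemma nn_integral_beta_prime_kernel_le:
  fixes r d :: real
  assumes r: "r > 0" and d: "d > 0"
  shows "(\<integral>\<^sup>+t. ennreal (indicator {0<..} t * t powr (r - 1) * (1 + t) powr (- (d + r))) \<partial>lborel)
       \<le> ennreal (1 / r + 1 / d)"
proof -
  have "(\<integral>\<^sup>+t. ennreal (indicator {0<..} t * t powr (r - 1) * (1 + t) powr (- (d + r))) \<partial>lborel)
      \<le> (\<integral>\<^sup>+t. ennreal (t powr (r - 1)) * indicator {0..1} t
                + ennreal (t powr (- d - 1)) * indicator {1..} t \<partial>lborel)"
  proof (intro nn_integral_mono)
    fix t :: real
    have "t powr (r - 1) * (1 + t) powr (- (d + r)) \<le> t powr (r - 1)" if "0 < t"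
      using that d r powr_mono2'[of "- (d + r)" 1 "1 + t"] by (intro mult_left_le) auto
    moreover have "t powr (r - 1) * (1 + t) powr (- (d + r)) \<le> t powr (- d - 1)" if "1 < t"
    proof -
      have "t powr (r - 1) * (1 + t) powr (- (d + r)) \<le> t powr (r - 1) * t powr (- (d + r))"
        using that d r by (intro mult_left_mono powr_mono2') auto
      also have "\<dots> = t powr ((r - 1) + (- (d + r)))"
        by (rule powr_add[symmetric])
      also have "(r - 1) + (- (d + r)) = - d - 1"
        by simp
      finally show ?thesis .
    qed
    ultimately show "ennreal (indicator {0<..} t * t powr (r - 1) * (1 + t) powr (- (d + r)))
        \<le> ennreal (t powr (r - 1)) * indicator {0..1} t + ennreal (t powr (- d - 1)) * indicator {1..} t"
      by (cases "t \<le> 1") (auto simp: indicator_def add_increasing2)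
  qed
  also have "\<dots> = (\<integral>\<^sup>+t. ennreal (t powr (r - 1)) * indicator {0..1} t \<partial>lborel)
                 + (\<integral>\<^sup>+t. ennreal (t powr (- d - 1)) * indicator {1..} t \<partial>lborel)"
    by (intro nn_integral_add) auto
  also have "(\<integral>\<^sup>+t. ennreal (t powr (r - 1)) * indicator {0..1} t \<partial>lborel) = ennreal (1 / r)"
    using has_integral_powr_from_0[of "r - 1" 1] r by (intro nn_integral_has_integral_lebesgue') auto
  also have "(\<integral>\<^sup>+t. ennreal (t powr (- d - 1)) * indicator {1..} t \<partial>lborel) = ennreal (1 / d)"
    using has_integral_powr_to_inf[of "- d - 1" 1] d by (intro nn_integral_has_integral_lebesgue') auto
  finally show ?thesis
    using r d by (simp add: ennreal_plus[symmetric] del: ennreal_plus)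
qed

lemma Gamma_ratio_le_linear:
  fixes e :: real
  assumes e: "e > 0"
  obtains K where "K > 0" and "\<And>s. 0 < s \<Longrightarrow> s \<le> 1 \<Longrightarrow> Gamma (s + e) / Gamma s \<le> K * s"
proof -
  have not_nonpos_Int: "z \<notin> \<int>\<^sub>\<le>\<^sub>0" if "z > 0" for z :: real
    using that by (auto dest: nonpos_Ints_nonpos)
  let ?g = "\<lambda>s::real. Gamma (s + e) / Gamma (s + 1)"
  have "continuous_on {0..1} ?g"
    using e by (intro continuous_at_imp_continuous_on ballI continuous_intros)
      (auto simp: Gamma_eq_zero_iff intro!: not_nonpos_Int)
  then have "bounded (?g ` {0..1})"
    by (intro compact_imp_bounded compact_continuous_image) auto
  then obtain K where K: "\<And>x. x \<in> ?g ` {0..1} \<Longrightarrow> norm x \<le> K"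
    unfolding bounded_iff by blast
  show ?thesis
  proof (rule that[of "max K 1"])
    fix s :: real
    assume s: "0 < s" "s \<le> 1"
    have "Gamma (s + e) / Gamma s = s * ?g s"
      using s Gamma_plus1[OF not_nonpos_Int[of s]] Gamma_real_pos[of s] by (simp add: field_simps)
    also have "\<dots> \<le> s * max K 1"
      using s e K[of "?g s"] Gamma_real_pos[of "s + e"] by (intro mult_left_mono) auto
    finally show "Gamma (s + e) / Gamma s \<le> max K 1 * s"
      by (simp add: mult.commute)
  qed simp
qed

text \<open>The Gamma integral \<open>(x + y) powr - r = (\<integral>\<^sub>0\<^sup>\<infinity> t powr (r - 1) exp (- (x + y) t) dt) / \<Gamma> r\<close>
  decouples \<open>x\<close> and \<open>y\<close>.\<close>

lemma gamma_density_pair_ratio_eq_nn_integral: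
  fixes a b p q r x y :: real
  assumes a: "a > 0" and b: "b > 0" and r: "r > 0"
  shows "ennreal (gamma_density a x * gamma_density b y * (x powr p * y powr q / (x + y) powr r))
       = (\<integral>\<^sup>+t. ennreal (indicator {0<..} t * t powr (r - 1) / Gamma r)
              * ennreal (gamma_density a x * x powr p * exp (- (t * x)))
              * ennreal (gamma_density b y * y powr q * exp (- (t * y))) \<partial>lborel)"
proof (cases "x > 0 \<and> y > 0")
  case True
  define C where "C = gamma_density a x * x powr p * gamma_density b y * y powr q / Gamma r"
  have Gr: "Gamma r > 0"
    using r by (rule Gamma_real_pos)
  have C: "C \<ge> 0"
    unfolding C_def using a b Gr gamma_density_nonneg by simp
  have "(\<integral>\<^sup>+t. ennreal (indicator {0<..} t * t powr (r - 1) / Gamma r)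
              * ennreal (gamma_density a x * x powr p * exp (- (t * x)))
              * ennreal (gamma_density b y * y powr q * exp (- (t * y))) \<partial>lborel)
      = (\<integral>\<^sup>+t. ennreal (C * (indicator {0<..} t * t powr (r - 1) * exp (- ((x + y) * t)))) \<partial>lborel)"
    using Gr gamma_density_nonneg[OF a, of x] gamma_density_nonneg[OF b, of y]
    by (intro nn_integral_cong)
      (auto simp: C_def ennreal_mult'[symmetric] exp_add[symmetric] indicator_def algebra_simps)
  also have "\<dots> = ennreal (C * Gamma r / (x + y) powr r)"
    using True r C by (intro nn_integral_gamma_kernel_cmult) auto
  also have "C * Gamma r / (x + y) powr r
      = gamma_density a x * gamma_density b y * (x powr p * y powr q / (x + y) powr r)"
    using Gr by (simp add: C_def field_simps)
  finally show ?thesis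
    by simp
next
  case False
  then show ?thesis
    by (auto simp: gamma_density_def)
qed

lemma nn_integral_gamma_density_powr_exp_product:
  fixes a b p q t :: real
  assumes a: "a > 0" and b: "b > 0" and p: "p \<ge> 0" and q: "q \<ge> 0" and pq: "p + q > 0"
  shows "ennreal (indicator {0<..} t * t powr (p + q - 1) / Gamma (p + q))
           * (\<integral>\<^sup>+x. ennreal (gamma_density a x * x powr p * exp (- (t * x))) \<partial>lborel)
           * (\<integral>\<^sup>+y. ennreal (gamma_density b y * y powr q * exp (- (t * y))) \<partial>lborel)
       = ennreal (Gamma (a + p) * Gamma (b + q) / (Gamma a * Gamma b * Gamma (p + q)))
           * ennreal (indicator {0<..} t * t powr (p + q - 1) * (1 + t) powr (- (a + b + (p + q))))"
proof (cases "t > 0")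
  case True
  have Gamma_pos: "Gamma a > 0" "Gamma b > 0" "Gamma (p + q) > 0" "Gamma (a + p) > 0" "Gamma (b + q) > 0"
    using a b p q pq by (simp_all add: Gamma_real_pos)
  have "(1 + t) powr (a + p) * (1 + t) powr (b + q) = (1 + t) powr (a + b + (p + q))"
    by (simp add: powr_add[symmetric] add_ac)
  then have "(1 + t) powr (- (a + b + (p + q))) = 1 / ((1 + t) powr (a + p) * (1 + t) powr (b + q))"
    by (metis powr_minus_divide)
  then have "t powr (p + q - 1) / Gamma (p + q) * (Gamma (a + p) / (Gamma a * (1 + t) powr (a + p)))
        * (Gamma (b + q) / (Gamma b * (1 + t) powr (b + q)))
      = Gamma (a + p) * Gamma (b + q) / (Gamma a * Gamma b * Gamma (p + q))
        * (t powr (p + q - 1) * (1 + t) powr (- (a + b + (p + q))))"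
    by (simp add: mult_ac)
  then show ?thesis
    using True a b p q Gamma_pos
    by (simp add: nn_integral_gamma_density_powr_exp ennreal_mult[symmetric])
next
  case False
  then show ?thesis
    by simp
qed

lemma nn_integral_gamma_pair_ratio_le:
  fixes a b p q :: real
  assumes a: "a > 0" and b: "b > 0" and p: "p \<ge> 0" and q: "q \<ge> 0" and pq: "p + q > 0"
  shows "(\<integral>\<^sup>+x. \<integral>\<^sup>+y. ennreal (gamma_density a x * gamma_density b y
              * (x powr p * y powr q / (x + y) powr (p + q))) \<partial>lborel \<partial>lborel)
       \<le> ennreal (Gamma (a + p) * Gamma (b + q) / (Gamma a * Gamma b * Gamma (p + q))
              * (1 / (p + q) + 1 / (a + b)))"
proof -
  define C where "C = Gamma (a + p) * Gamma (b + q) / (Gamma a * Gamma b * Gamma (p + q))"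
  have C: "C \<ge> 0"
    using a b p q pq by (simp add: C_def Gamma_real_pos less_imp_le)
  define kt where "kt t = ennreal (indicator {0<..} t * t powr (p + q - 1) / Gamma (p + q))" for t :: real
  define kx where "kx t x = ennreal (gamma_density a x * x powr p * exp (- (t * x)))" for t x :: real
  define ky where "ky t y = ennreal (gamma_density b y * y powr q * exp (- (t * y)))" for t y :: real
  have [measurable]: "case_prod kx \<in> borel_measurable (lborel \<Otimes>\<^sub>M lborel)"
    "case_prod ky \<in> borel_measurable (lborel \<Otimes>\<^sub>M lborel)" "kt \<in> borel_measurable lborel"
    unfolding kt_def kx_def ky_def by measurable
  have "(\<integral>\<^sup>+x. \<integral>\<^sup>+y. ennreal (gamma_density a x * gamma_density b y
              * (x powr p * y powr q / (x + y) powr (p + q))) \<partial>lborel \<partial>lborel)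
      = (\<integral>\<^sup>+x. \<integral>\<^sup>+y. \<integral>\<^sup>+t. kt t * kx t x * ky t y \<partial>lborel \<partial>lborel \<partial>lborel)"
    unfolding kt_def kx_def ky_def by (simp only: gamma_density_pair_ratio_eq_nn_integral[OF a b pq])
  also have "\<dots> = (\<integral>\<^sup>+x. \<integral>\<^sup>+t. \<integral>\<^sup>+y. kt t * kx t x * ky t y \<partial>lborel \<partial>lborel \<partial>lborel)"
    by (intro nn_integral_cong lborel_pair.Fubini') measurable
  also have "\<dots> = (\<integral>\<^sup>+x. \<integral>\<^sup>+t. kt t * kx t x * (\<integral>\<^sup>+y. ky t y \<partial>lborel) \<partial>lborel \<partial>lborel)"
    by (intro nn_integral_cong nn_integral_cmult) measurable
  also have "\<dots> = (\<integral>\<^sup>+t. \<integral>\<^sup>+x. kt t * kx t x * (\<integral>\<^sup>+y. ky t y \<partial>lborel) \<partial>lborel \<partial>lborel)"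
    by (rule lborel_pair.Fubini') measurable
  also have "\<dots> = (\<integral>\<^sup>+t. kt t * (\<integral>\<^sup>+x. kx t x \<partial>lborel) * (\<integral>\<^sup>+y. ky t y \<partial>lborel) \<partial>lborel)"
    by (intro nn_integral_cong) (simp add: nn_integral_cmult nn_integral_multc mult.assoc)
  also have "\<dots> = ennreal C * (\<integral>\<^sup>+t. ennreal (indicator {0<..} t * t powr (p + q - 1)
                                   * (1 + t) powr (- (a + b + (p + q)))) \<partial>lborel)"
    unfolding kt_def kx_def ky_def C_def
    by (simp add: nn_integral_gamma_density_powr_exp_product[OF a b p q pq] nn_integral_cmult)
  also have "\<dots> \<le> ennreal C * ennreal (1 / (p + q) + 1 / (a + b))"
    using a b pq by (intro mult_left_mono nn_integral_beta_prime_kernel_le) auto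
  also have "\<dots> = ennreal (C * (1 / (p + q) + 1 / (a + b)))"
    by (rule ennreal_mult'[symmetric]) (rule C)
  finally show ?thesis
    unfolding C_def .
qed

section \<open>Gamma laws and Beta moments\<close>

lemma sets_gamma_measure [measurable_cong, simp]: "sets (gamma_measure a) = sets borel"
  by (simp add: gamma_measure_def)

lemma space_gamma_measure [simp]: "space (gamma_measure a) = UNIV"
  using sets_eq_imp_space_eq[OF sets_gamma_measure] by simp

lemma nn_integral_gamma_measure:
  assumes "a > 0" and [measurable]: "f \<in> borel_measurable borel"
  shows "(\<integral>\<^sup>+x. f x \<partial>gamma_measure a) = (\<integral>\<^sup>+x. ennreal (gamma_density a x) * f x \<partial>lborel)"
  using assms by (simp add: gamma_measure_def nn_integral_density)

lemma prob_space_gamma_measure: "prob_space (gamma_measure a)"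
proof (cases "a > 0")
  case True
  have "emeasure (gamma_measure a) (space (gamma_measure a))
      = (\<integral>\<^sup>+x. ennreal (1 / Gamma a * (indicator {0<..} x * x powr (a - 1) * exp (- (1 * x)))) \<partial>lborel)"
    using True by (auto simp: gamma_measure_def emeasure_density gamma_density_def indicator_def
        intro!: nn_integral_cong)
  also have "\<dots> = ennreal (1 / Gamma a * Gamma a / 1 powr a)"
    using True Gamma_real_pos[OF True] by (intro nn_integral_gamma_kernel_cmult) auto
  also have "\<dots> = 1"
    using Gamma_real_pos[OF True] by simp
  finally show ?thesis
    by (intro prob_spaceI)
next
  case False
  then show ?thesis
    by (simp add: gamma_measure_def prob_space_return)
qed

lemma measurable_nn_integral_gamma_measure [measurable (raw)]:
  assumes "case_prod f \<in> borel_measurable (N \<Otimes>\<^sub>M borel)"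
  shows "(\<lambda>x. \<integral>\<^sup>+y. f x y \<partial>gamma_measure a) \<in> borel_measurable N"
proof (rule sigma_finite_measure.borel_measurable_nn_integral)
  show "sigma_finite_measure (gamma_measure a)"
    using prob_space_gamma_measure prob_space_imp_sigma_finite by blast
  have "sets (N \<Otimes>\<^sub>M gamma_measure a) = sets (N \<Otimes>\<^sub>M borel)"
    by (intro sets_pair_measure_cong) auto
  then show "case_prod f \<in> borel_measurable (N \<Otimes>\<^sub>M gamma_measure a)"
    using assms by (simp add: measurable_def space_pair_measure)
qed

lemma nn_integral_PiM_two_gamma:
  fixes f :: "real \<Rightarrow> real \<Rightarrow> ennreal"
  assumes [measurable]: "case_prod f \<in> borel_measurable (borel \<Otimes>\<^sub>M borel)"
  shows "(\<integral>\<^sup>+g. f (g 0) (g 1) \<partial>PiM {..<2::nat} (\<lambda>i. gamma_measure (\<alpha> i)))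
       = (\<integral>\<^sup>+x. \<integral>\<^sup>+y. f x y \<partial>gamma_measure (\<alpha> 1) \<partial>gamma_measure (\<alpha> 0))"
proof -
  interpret product_sigma_finite "\<lambda>i. gamma_measure (\<alpha> i)"
    unfolding product_sigma_finite_def
    using prob_space_gamma_measure prob_space_imp_sigma_finite by blast
  have two: "{..<2::nat} = insert 1 {0}"
    by auto
  have "(\<integral>\<^sup>+g. f (g 0) (g 1) \<partial>PiM {..<2::nat} (\<lambda>i. gamma_measure (\<alpha> i)))
      = (\<integral>\<^sup>+g. (\<integral>\<^sup>+y. f ((g(1 := y)) 0) ((g(1 := y)) 1) \<partial>gamma_measure (\<alpha> 1))
            \<partial>PiM {0} (\<lambda>i. gamma_measure (\<alpha> i)))"
    unfolding two by (rule product_nn_integral_insert) auto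
  also have "\<dots> = (\<integral>\<^sup>+g. (\<lambda>x. \<integral>\<^sup>+y. f x y \<partial>gamma_measure (\<alpha> 1)) (g 0)
            \<partial>PiM {0} (\<lambda>i. gamma_measure (\<alpha> i)))"
    by simp
  also have "\<dots> = (\<integral>\<^sup>+x. \<integral>\<^sup>+y. f x y \<partial>gamma_measure (\<alpha> 1) \<partial>gamma_measure (\<alpha> 0))"
    by (rule product_nn_integral_singleton) measurable
  finally show ?thesis .
qed

text \<open>\<open>f\<close> stands for \<open>u \<mapsto> u powr p * (1 - u) powr q\<close>; it is only pinned down at interior points
  \<open>x / (x + y)\<close> because \<open>0 powr 0 = 0\<close>.\<close>

lemma nn_integral_beta_moment_le:
  fixes f :: "real \<Rightarrow> ennreal"
  assumes a: "\<alpha> 0 > 0" and b: "\<alpha> 1 > 0" and p: "p \<ge> 0" and q: "q \<ge> 0" and pq: "p + q > 0"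
    and [measurable]: "f \<in> borel_measurable borel"
    and f: "\<And>x y. x > 0 \<Longrightarrow> y > 0 \<Longrightarrow> f (x / (x + y)) = ennreal (x powr p * y powr q / (x + y) powr (p + q))"
  shows "(\<integral>\<^sup>+g. f (g 0 / (\<Sum>j<2. g j)) \<partial>PiM {..<2::nat} (\<lambda>i. gamma_measure (\<alpha> i)))
       \<le> ennreal (Gamma (\<alpha> 0 + p) * Gamma (\<alpha> 1 + q) / (Gamma (\<alpha> 0) * Gamma (\<alpha> 1) * Gamma (p + q))
            * (1 / (p + q) + 1 / (\<alpha> 0 + \<alpha> 1)))"
proof -
  have "(\<integral>\<^sup>+g. f (g 0 / (\<Sum>j<2. g j)) \<partial>PiM {..<2::nat} (\<lambda>i. gamma_measure (\<alpha> i)))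
      = (\<integral>\<^sup>+g. (\<lambda>x y. f (x / (x + y))) (g 0) (g 1) \<partial>PiM {..<2::nat} (\<lambda>i. gamma_measure (\<alpha> i)))"
    by (simp add: numeral_2_eq_2)
  also have "\<dots> = (\<integral>\<^sup>+x. \<integral>\<^sup>+y. f (x / (x + y)) \<partial>gamma_measure (\<alpha> 1) \<partial>gamma_measure (\<alpha> 0))"
    by (rule nn_integral_PiM_two_gamma) measurable
  also have "\<dots> = (\<integral>\<^sup>+x. \<integral>\<^sup>+y. ennreal (gamma_density (\<alpha> 0) x) * (ennreal (gamma_density (\<alpha> 1) y)
                      * f (x / (x + y))) \<partial>lborel \<partial>lborel)"
    using a b by (simp add: nn_integral_gamma_measure nn_integral_cmult)
  also have "\<dots> = (\<integral>\<^sup>+x. \<integral>\<^sup>+y. ennreal (gamma_density (\<alpha> 0) x * gamma_density (\<alpha> 1) y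
                      * (x powr p * y powr q / (x + y) powr (p + q))) \<partial>lborel \<partial>lborel)"
  proof (intro nn_integral_cong)
    fix x y :: real
    show "ennreal (gamma_density (\<alpha> 0) x) * (ennreal (gamma_density (\<alpha> 1) y) * f (x / (x + y)))
        = ennreal (gamma_density (\<alpha> 0) x * gamma_density (\<alpha> 1) y
            * (x powr p * y powr q / (x + y) powr (p + q)))"
    proof (cases "x > 0 \<and> y > 0")
      case True
      then show ?thesis
        using f[of x y] gamma_density_nonneg[OF a, of x] gamma_density_nonneg[OF b, of y]
        by (simp add: ennreal_mult[symmetric] mult.assoc)
    next
      case False
      then show ?thesis
        by (auto simp: gamma_density_def)
    qed
  qed
  also have "\<dots> \<le> ennreal (Gamma (\<alpha> 0 + p) * Gamma (\<alpha> 1 + q) / (Gamma (\<alpha> 0) * Gamma (\<alpha> 1) * Gamma (p + q))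
            * (1 / (p + q) + 1 / (\<alpha> 0 + \<alpha> 1)))"
    using a b p q pq by (rule nn_integral_gamma_pair_ratio_le)
  finally show ?thesis .
qed

section \<open>Empirical measures and Dirichlet processes\<close>

lemma sets_empirical [simp, measurable_cong]: "sets (empirical N a) = sets borel"
  by (simp add: empirical_def)

lemma space_empirical [simp]: "space (empirical N a) = UNIV"
  by (simp add: empirical_def)

lemma prob_space_empirical: "prob_space (empirical N a)"
  unfolding empirical_def
  by (intro prob_space.prob_space_distr) (auto simp: measure_pmf.prob_space_axioms)

lemma measure_empirical:
  assumes "N \<ge> 1" and "B \<in> sets borel"
  shows "measure (empirical N a) B = card ({1..N} \<inter> a -` B) / N"
  unfolding empirical_def using assms
  by (subst measure_distr) (auto simp: measure_pmf_of_set)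

lemma integral_empirical:
  assumes "N \<ge> 1" and "f \<in> borel_measurable borel"
  shows "integral\<^sup>L (empirical N a) f = (\<Sum>j\<in>{1..N}. f (a j)) / N"
  unfolding empirical_def using assms
  by (subst integral_distr) (auto simp: integral_pmf_of_set)

lemma prob_space_finite_support:
  fixes P :: "real measure"
  assumes P: "prob_space P" and sets_P: "sets P = sets borel" and S: "finite S"
    and null: "measure P (- S) = 0" and [measurable]: "f \<in> borel_measurable borel"
  shows "(\<Sum>s\<in>S. measure P {s}) = 1" and "integral\<^sup>L P f = (\<Sum>s\<in>S. f s * measure P {s})"
proof -
  interpret prob_space P
    by (rule P)
  have space_P: "space P = UNIV"
    using sets_eq_imp_space_eq[OF sets_P] by simp
  have S_sets: "S \<in> sets P"
    using S sets_P by (simp add: borel_closed finite_imp_closed)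
  then have "-S \<in> sets P"
    using space_P by (metis Compl_eq_Diff_UNIV sets.compl_sets)
  then have "-S \<in> null_sets P"
    using null by (simp add: null_sets_def emeasure_eq_measure)
  then have ae_S: "AE x in P. x \<in> S"
    by (rule AE_I') auto
  have "(\<Sum>s\<in>S. measure P {s}) = measure P S"
    using S sets_P by (intro measure_eq_sum_singleton[symmetric]) auto
  also have "\<dots> = 1 - measure P (- S)"
    using prob_compl[OF S_sets] space_P by (simp add: Compl_eq_Diff_UNIV)
  finally show "(\<Sum>s\<in>S. measure P {s}) = 1"
    using null by simp
  have indicator_integrable: "integrable P (\<lambda>x. f s * indicator {s} x)" for s
    using sets_P by (intro integrable_mult_right integrable_real_indicator)
      (auto simp: emeasure_eq_measure)
  have "integral\<^sup>L P f = integral\<^sup>L P (\<lambda>x. \<Sum>s\<in>S. f s * indicator {s} x)"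
  proof (rule integral_cong_AE)
    show "AE x in P. f x = (\<Sum>s\<in>S. f s * indicator {s} x)"
      using ae_S by eventually_elim (use S in \<open>simp add: indicator_def sum.delta\<close>)
  qed (simp_all add: measurable_cong_sets[OF sets_P refl])
  also have "\<dots> = (\<Sum>s\<in>S. integral\<^sup>L P (\<lambda>x. f s * indicator {s} x))"
    by (rule Bochner_Integration.integral_sum) (rule indicator_integrable)
  also have "\<dots> = (\<Sum>s\<in>S. f s * measure P {s})"
    using sets_P by (simp add: emeasure_eq_measure)
  finally show "integral\<^sup>L P f = (\<Sum>s\<in>S. f s * measure P {s})" .
qed

lemma dirichlet_process_nn_integral_measure:
  assumes dp: "dirichlet_process M D c \<mu>" and A: "A \<in> sets borel"
    and [measurable]: "f \<in> borel_measurable borel"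
  shows "(\<integral>\<^sup>+\<omega>. f (measure (D \<omega>) A) \<partial>M)
       = (\<integral>\<^sup>+g. f (g 0 / (\<Sum>j<2. g j))
            \<partial>PiM {..<2::nat} (\<lambda>i. gamma_measure (c * measure \<mu> (if i = 0 then A else - A))))"
proof -
  define B where "B i = (if i = 0 then A else - A)" for i :: nat
  define W where "W = PiM {..<2::nat} (\<lambda>i. gamma_measure (c * measure \<mu> (B i)))"
  have [measurable]: "D \<in> measurable M (subprob_algebra borel)"
    using dp by (simp add: dirichlet_process_def)
  have B: "B i \<in> sets borel" for i
    using A by (simp add: B_def)
  have "disjoint_family_on B {..<2}" and "(\<Union>i<2. B i) = UNIV"
    by (auto simp: disjoint_family_on_def B_def numeral_2_eq_2)
  then have law: "distr M (PiM {..<2} (\<lambda>_. borel)) (\<lambda>\<omega>. restrict (\<lambda>i. measure (D \<omega>) (B i)) {..<2})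
      = dirichlet 2 (\<lambda>i. c * measure \<mu> (B i))"
    using dp B unfolding dirichlet_process_def by blast
  have [measurable]: "(\<lambda>\<omega>. restrict (\<lambda>i. measure (D \<omega>) (B i)) {..<2::nat}) \<in> M \<rightarrow>\<^sub>M PiM {..<2} (\<lambda>_. borel)"
  proof (rule measurable_restrict)
    show "(\<lambda>\<omega>. measure (D \<omega>) (B i)) \<in> borel_measurable M" for i
      using B[of i] by measurable
  qed
  have [measurable]: "(\<lambda>g. restrict (\<lambda>i. g i / (\<Sum>j<2. g j)) {..<2::nat}) \<in> W \<rightarrow>\<^sub>M PiM {..<2} (\<lambda>_. borel)"
    unfolding W_def by measurable
  have "(\<integral>\<^sup>+\<omega>. f (measure (D \<omega>) A) \<partial>M)
      = (\<integral>\<^sup>+\<omega>. (\<lambda>z. f (z 0)) (restrict (\<lambda>i. measure (D \<omega>) (B i)) {..<2::nat}) \<partial>M)"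
    by (simp add: B_def)
  also have "\<dots> = (\<integral>\<^sup>+z. f (z 0) \<partial>dirichlet 2 (\<lambda>i. c * measure \<mu> (B i)))"
    by (subst law[symmetric], rule nn_integral_distr[symmetric]) measurable
  also have "\<dots> = (\<integral>\<^sup>+g. f (restrict (\<lambda>i. g i / (\<Sum>j<2. g j)) {..<2::nat} 0) \<partial>W)"
    unfolding dirichlet_def W_def[symmetric] by (rule nn_integral_distr) measurable
  finally show ?thesis
    by (simp add: W_def B_def)
qed

lemma measurable_random_mean [measurable]:
  fixes D :: "'a \<Rightarrow> real measure"
  assumes "D \<in> measurable M (subprob_algebra borel)"
  shows "(\<lambda>\<omega>. \<integral>x. x \<partial>D \<omega>) \<in> borel_measurable M"
  by (rule measurable_compose[OF assms integral_measurable_subprob_algebra]) simp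

lemma real_distribution_random_mean_law:
  assumes "dirichlet_process M D c \<mu>"
  shows "real_distribution (random_mean_law M D)"
proof -
  have "prob_space (random_mean_law M D)"
    using assms unfolding random_mean_law_def dirichlet_process_def
    by (auto intro!: prob_space.prob_space_distr)
  then show ?thesis
    by (simp add: real_distribution_def real_distribution_axioms_def random_mean_law_def)
qed

lemma integral_random_mean_law:
  fixes D :: "'a \<Rightarrow> real measure" and f :: "real \<Rightarrow> real"
  assumes "dirichlet_process M D c \<mu>" and "f \<in> borel_measurable borel"
  shows "integral\<^sup>L (random_mean_law M D) f = (\<integral>\<omega>. f (\<integral>x. x \<partial>D \<omega>) \<partial>M)"
proof -
  have "D \<in> measurable M (subprob_algebra borel)"
    using assms(1) by (simp add: dirichlet_process_def)
  then have "(\<lambda>\<omega>. \<integral>x. x \<partial>D \<omega>) \<in> borel_measurable M"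
    by (rule measurable_random_mean)
  then show ?thesis
    unfolding random_mean_law_def using assms(2) by (rule integral_distr)
qed

lemma integral_le_if_nn_integral_le:
  fixes h :: "'a \<Rightarrow> real"
  assumes [measurable]: "h \<in> borel_measurable M" and "\<And>\<omega>. \<omega> \<in> space M \<Longrightarrow> 0 \<le> h \<omega>"
    and "(\<integral>\<^sup>+\<omega>. ennreal (h \<omega>) \<partial>M) \<le> ennreal B" and "B \<ge> 0"
  shows "integral\<^sup>L M h \<le> B"
proof -
  have "integral\<^sup>L M h = enn2real (\<integral>\<^sup>+\<omega>. ennreal (h \<omega>) \<partial>M)"
    using assms by (intro integral_eq_nn_integral) auto
  also have "\<dots> \<le> B"
    using assms by (intro enn2real_leI)
  finally show ?thesis .
qed

section \<open>A Jensen-gap estimate for bounded Lipschitz functions\<close>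

lemma abs_convex_comb_minus_le:
  fixes w y :: "'i \<Rightarrow> real"
  assumes J: "finite J" and w: "\<And>j. j \<in> J \<Longrightarrow> 0 \<le> w j" and sum_w: "(\<Sum>j\<in>J. w j) = 1"
    and i: "i \<in> J" and y: "\<And>j. j \<in> J \<Longrightarrow> \<bar>y j\<bar> \<le> R"
  shows "\<bar>(\<Sum>j\<in>J. w j * y j) - y i\<bar> \<le> 2 * R * (1 - w i)"
proof -
  have "(\<Sum>j\<in>J. w j * y j) - y i = (\<Sum>j\<in>J. w j * (y j - y i))"
    using sum_w by (simp add: right_diff_distrib sum_subtractf sum_distrib_right[symmetric])
  also have "\<dots> = (\<Sum>j\<in>J - {i}. w j * (y j - y i))"
    using J i by (intro sum.mono_neutral_right) auto
  finally have "\<bar>(\<Sum>j\<in>J. w j * y j) - y i\<bar> \<le> (\<Sum>j\<in>J - {i}. \<bar>w j * (y j - y i)\<bar>)"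
    by (simp add: sum_abs)
  also have "\<dots> \<le> (\<Sum>j\<in>J - {i}. w j * (2 * R))"
  proof (rule sum_mono)
    fix j
    assume "j \<in> J - {i}"
    then have "\<bar>y j - y i\<bar> \<le> 2 * R" and "0 \<le> w j"
      using y[of j] y[OF i] w[of j] by auto
    then show "\<bar>w j * (y j - y i)\<bar> \<le> w j * (2 * R)"
      by (simp add: abs_mult mult_left_mono)
  qed
  also have "\<dots> = 2 * R * (1 - w i)"
    using J i sum_w by (simp add: sum_distrib_right[symmetric] sum_diff1)
  finally show ?thesis .
qed

lemma min_sum_le_sum_min:
  fixes y :: "'i \<Rightarrow> real"
  assumes "C \<ge> 0" and "finite J" and "\<And>j. j \<in> J \<Longrightarrow> 0 \<le> y j"
  shows "min C (\<Sum>j\<in>J. y j) \<le> (\<Sum>j\<in>J. min C (y j))"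
  using assms(2,3)
proof (induction J rule: finite_induct)
  case (insert k J)
  have "min C (\<Sum>j\<in>insert k J. y j) = min C (y k + (\<Sum>j\<in>J. y j))"
    using insert.hyps by simp
  also have "\<dots> \<le> min C (y k) + min C (\<Sum>j\<in>J. y j)"
  proof -
    have "0 \<le> y k" "0 \<le> (\<Sum>j\<in>J. y j)"
      using insert.prems by (auto intro: sum_nonneg)
    then show ?thesis
      using assms(1) by (auto simp: min_def)
  qed
  also have "\<dots> \<le> min C (y k) + (\<Sum>j\<in>J. min C (y j))"
    using insert by auto
  finally show ?case
    using insert by simp
qed (use assms(1) in simp)

lemma self_le_powr:
  fixes t e :: real
  assumes "0 \<le> t" and "t \<le> 1" and "0 < e" and "e \<le> 1"
  shows "t \<le> t powr e"
  using assms powr_mono'[of e 1 t] by (cases "t = 0") auto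

lemma min_le_mult_powr:
  fixes C y e :: real
  assumes "C \<ge> 1" and "y \<ge> 0" and "0 < e" and "e \<le> 1"
  shows "min C y \<le> C * y powr e"
proof (cases "y \<le> 1")
  case True
  then have "y \<le> y powr e"
    using assms by (intro self_le_powr)
  also have "\<dots> \<le> C * y powr e"
    using assms(1) mult_right_mono[of 1 C "y powr e"] by simp
  finally show ?thesis
    by simp
next
  case False
  then have "1 \<le> y powr e"
    using assms by (intro ge_one_powr_ge_zero) auto
  then show ?thesis
    using assms by (simp add: min.coboundedI1)
qed

lemma min_two_abs_sum_le:
  fixes w y :: "'i \<Rightarrow> real"
  assumes J: "finite J" and w: "\<And>j. j \<in> J \<Longrightarrow> 0 \<le> w j" and L: "L \<ge> 1" and e: "0 < e" "e \<le> 1"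
  shows "min 2 (L * \<bar>\<Sum>j\<in>J. y j * w j\<bar>) \<le> 2 * L * (\<Sum>j\<in>J. w j powr e * \<bar>y j\<bar> powr e)"
proof -
  have "L * \<bar>\<Sum>j\<in>J. y j * w j\<bar> \<le> (\<Sum>j\<in>J. L * \<bar>y j * w j\<bar>)"
    using L by (simp add: sum_distrib_left[symmetric] sum_abs mult_left_mono)
  then have "min 2 (L * \<bar>\<Sum>j\<in>J. y j * w j\<bar>) \<le> min 2 (\<Sum>j\<in>J. L * \<bar>y j * w j\<bar>)"
    by (rule min.mono[OF order_refl])
  also have "\<dots> \<le> (\<Sum>j\<in>J. min 2 (L * \<bar>y j * w j\<bar>))"
    using J L by (intro min_sum_le_sum_min) auto
  also have "\<dots> \<le> (\<Sum>j\<in>J. 2 * (L * (w j powr e * \<bar>y j\<bar> powr e)))"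
  proof (rule sum_mono)
    fix j
    assume j: "j \<in> J"
    have "min 2 (L * \<bar>y j * w j\<bar>) \<le> 2 * (L * \<bar>y j * w j\<bar>) powr e"
      using L e by (intro min_le_mult_powr) auto
    also have "(L * \<bar>y j * w j\<bar>) powr e = L powr e * (w j powr e * \<bar>y j\<bar> powr e)"
      using L w[OF j] by (simp add: abs_mult powr_mult mult_ac)
    also have "L powr e \<le> L"
      using L e powr_mono[of e 1 L] by simp
    finally show "min 2 (L * \<bar>y j * w j\<bar>) \<le> 2 * (L * (w j powr e * \<bar>y j\<bar> powr e))"
      by (simp add: mult_right_mono)
  qed
  finally show ?thesis
    by (simp add: sum_distrib_left mult.assoc)
qed

lemma bounded_lipschitz_convex_comb_minus_le:
  fixes w x :: "'i \<Rightarrow> real" and \<phi> :: "real \<Rightarrow> real"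
  assumes J: "finite J" and w: "\<And>j. j \<in> J \<Longrightarrow> 0 \<le> w j" and sum_w: "(\<Sum>j\<in>J. w j) = 1"
    and \<phi>_bounded: "\<And>t. \<bar>\<phi> t\<bar> \<le> 1" and \<phi>_lipschitz: "\<And>s t. \<bar>\<phi> s - \<phi> t\<bar> \<le> L * \<bar>s - t\<bar>"
    and L: "L \<ge> 0" and R: "R \<ge> 0" and i: "i \<in> J"
  shows "\<bar>\<phi> (\<Sum>j\<in>J. x j * w j) - \<phi> (x i)\<bar>
       \<le> min 2 (L * \<bar>\<Sum>j\<in>J. (if R < \<bar>x j\<bar> then x j else 0) * w j\<bar>)
         + (if R < \<bar>x i\<bar> then 2 else 2 * L * R * (1 - w i))"
proof -
  define inner where "inner j = (if R < \<bar>x j\<bar> then 0 else x j)" for j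
  define m where "m = (\<Sum>j\<in>J. x j * w j)"
  define m_inner where "m_inner = (\<Sum>j\<in>J. w j * inner j)"
  have \<phi>_diff: "\<bar>\<phi> s - \<phi> t\<bar> \<le> 2" for s t
    using \<phi>_bounded[of s] \<phi>_bounded[of t] by linarith
  have "x j * w j - w j * inner j = (if R < \<bar>x j\<bar> then x j else 0) * w j" for j
    by (simp add: inner_def)
  then have "m - m_inner = (\<Sum>j\<in>J. (if R < \<bar>x j\<bar> then x j else 0) * w j)"
    unfolding m_def m_inner_def by (simp add: sum_subtractf[symmetric])
  then have shift: "\<bar>\<phi> m - \<phi> m_inner\<bar> \<le> min 2 (L * \<bar>\<Sum>j\<in>J. (if R < \<bar>x j\<bar> then x j else 0) * w j\<bar>)"
    using \<phi>_diff[of m m_inner] \<phi>_lipschitz[of m m_inner] by simp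
  have triangle: "\<bar>\<phi> m - \<phi> (x i)\<bar> \<le> \<bar>\<phi> m - \<phi> m_inner\<bar> + \<bar>\<phi> m_inner - \<phi> (x i)\<bar>"
    using abs_triangle_ineq[of "\<phi> m - \<phi> m_inner" "\<phi> m_inner - \<phi> (x i)"] by simp
  have "\<bar>\<phi> m - \<phi> (x i)\<bar>
      \<le> min 2 (L * \<bar>\<Sum>j\<in>J. (if R < \<bar>x j\<bar> then x j else 0) * w j\<bar>)
        + (if R < \<bar>x i\<bar> then 2 else 2 * L * R * (1 - w i))"
  proof (cases "R < \<bar>x i\<bar>")
    case True
    have "\<bar>\<phi> m - \<phi> (x i)\<bar> \<le> min 2 (L * \<bar>\<Sum>j\<in>J. (if R < \<bar>x j\<bar> then x j else 0) * w j\<bar>) + 2"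
      using triangle shift \<phi>_diff[of m_inner "x i"] by linarith
    then show ?thesis
      using True by simp
  next
    case False
    have "\<bar>m_inner - inner i\<bar> \<le> 2 * R * (1 - w i)"
      unfolding m_inner_def using J w sum_w i R
      by (intro abs_convex_comb_minus_le) (auto simp: inner_def)
    then have "L * \<bar>m_inner - x i\<bar> \<le> L * (2 * R * (1 - w i))"
      using False L by (intro mult_left_mono) (auto simp: inner_def)
    then have "\<bar>\<phi> m - \<phi> (x i)\<bar>
        \<le> min 2 (L * \<bar>\<Sum>j\<in>J. (if R < \<bar>x j\<bar> then x j else 0) * w j\<bar>) + 2 * L * R * (1 - w i)"
      using triangle shift \<phi>_lipschitz[of m_inner "x i"] by linarith
    then show ?thesis
      using False by simp
  qed
  then show ?thesis
    by (simp only: m_def)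
qed

lemma bounded_lipschitz_jensen_gap_le:
  fixes w x :: "'i \<Rightarrow> real" and \<phi> :: "real \<Rightarrow> real"
  assumes J: "finite J" and w: "\<And>j. j \<in> J \<Longrightarrow> 0 \<le> w j" and sum_w: "(\<Sum>j\<in>J. w j) = 1"
    and \<phi>_bounded: "\<And>t. \<bar>\<phi> t\<bar> \<le> 1" and \<phi>_lipschitz: "\<And>s t. \<bar>\<phi> s - \<phi> t\<bar> \<le> L * \<bar>s - t\<bar>"
    and L: "L \<ge> 1" and R: "R \<ge> 0" and e: "0 < e" "e \<le> 1"
  shows "\<bar>\<phi> (\<Sum>j\<in>J. x j * w j) - (\<Sum>j\<in>J. w j * \<phi> (x j))\<bar>
       \<le> 2 * L * (\<Sum>j\<in>J. if R < \<bar>x j\<bar> then w j powr e * \<bar>x j\<bar> powr e else 0)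
         + 2 * L * R * (\<Sum>j\<in>J. w j * (1 - w j))
         + 2 * (\<Sum>j\<in>J. if R < \<bar>x j\<bar> then w j else 0)"
proof -
  define m where "m = (\<Sum>j\<in>J. x j * w j)"
  define T where "T = min 2 (L * \<bar>\<Sum>j\<in>J. (if R < \<bar>x j\<bar> then x j else 0) * w j\<bar>)"
  have "\<phi> m - (\<Sum>j\<in>J. w j * \<phi> (x j)) = (\<Sum>j\<in>J. w j * (\<phi> m - \<phi> (x j)))"
    using sum_w by (simp add: right_diff_distrib sum_subtractf sum_distrib_right[symmetric])
  then have "\<bar>\<phi> m - (\<Sum>j\<in>J. w j * \<phi> (x j))\<bar> \<le> (\<Sum>j\<in>J. w j * \<bar>\<phi> m - \<phi> (x j)\<bar>)"
    using w by (simp add: order_trans[OF sum_abs] abs_mult)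
  also have "\<dots> \<le> (\<Sum>j\<in>J. w j * T + (2 * L * R * (w j * (1 - w j)) + 2 * (if R < \<bar>x j\<bar> then w j else 0)))"
  proof (rule sum_mono)
    fix j
    assume j: "j \<in> J"
    have "w j \<le> 1"
      using J j w member_le_sum[of j J w] sum_w by simp
    then have "w j * (T + (if R < \<bar>x j\<bar> then 2 else 2 * L * R * (1 - w j)))
        \<le> w j * T + (2 * L * R * (w j * (1 - w j)) + 2 * (if R < \<bar>x j\<bar> then w j else 0))"
      using w[OF j] L R by (simp add: distrib_left mult_ac)
    moreover have "\<bar>\<phi> m - \<phi> (x j)\<bar> \<le> T + (if R < \<bar>x j\<bar> then 2 else 2 * L * R * (1 - w j))"
      unfolding m_def T_def using assms j by (intro bounded_lipschitz_convex_comb_minus_le) auto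
    ultimately show "w j * \<bar>\<phi> m - \<phi> (x j)\<bar>
        \<le> w j * T + (2 * L * R * (w j * (1 - w j)) + 2 * (if R < \<bar>x j\<bar> then w j else 0))"
      using w[OF j] by (meson mult_left_mono order_trans)
  qed
  also have "\<dots> = T + 2 * L * R * (\<Sum>j\<in>J. w j * (1 - w j)) + 2 * (\<Sum>j\<in>J. if R < \<bar>x j\<bar> then w j else 0)"
    using sum_w by (simp add: sum.distrib sum_distrib_left[symmetric] sum_distrib_right[symmetric])
  also have "T \<le> 2 * L * (\<Sum>j\<in>J. w j powr e * \<bar>if R < \<bar>x j\<bar> then x j else 0\<bar> powr e)"
    unfolding T_def using J w L e by (rule min_two_abs_sum_le)
  also have "(\<Sum>j\<in>J. w j powr e * \<bar>if R < \<bar>x j\<bar> then x j else 0\<bar> powr e)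
      = (\<Sum>j\<in>J. if R < \<bar>x j\<bar> then w j powr e * \<bar>x j\<bar> powr e else 0)"
    by (intro sum.cong) simp_all
  finally show ?thesis
    unfolding m_def by simp
qed

section \<open>The class \<open>H_eta\<close>\<close>

lemma powr_add_le_add_powr:
  fixes A B e :: real
  assumes A: "A \<ge> 0" and B: "B \<ge> 0" and e: "0 < e" "e \<le> 1"
  shows "(A + B) powr e \<le> A powr e + B powr e"
proof (cases "A + B = 0")
  case True
  then show ?thesis
    using A B by simp
next
  case False
  define S where "S = A + B"
  have S: "S > 0"
    using A B False by (simp add: S_def)
  have "1 = A / S + B / S"
    using S by (simp add: S_def add_divide_distrib[symmetric])
  also have "\<dots> \<le> (A / S) powr e + (B / S) powr e"
    using A B S e by (intro add_mono self_le_powr) (auto simp: S_def)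
  also have "\<dots> = (A powr e + B powr e) / S powr e"
    using A B S by (simp add: powr_divide add_divide_distrib)
  finally show ?thesis
    using S by (simp add: S_def field_simps)
qed

lemma powr_add_minus_powr_le:
  fixes z d e :: real
  assumes z: "z \<ge> 1" and d: "d \<ge> 0" and e: "0 < e" "e \<le> 1"
  shows "(z + d) powr e - z powr e \<le> d"
proof -
  have dz: "0 \<le> d / z"
    using d z by simp
  then have "(1 + d / z) powr e * 1 powr (1 - e) \<le> e * (1 + d / z) + (1 - e) * 1"
    using e by (intro Youngs_inequality_0) auto
  then have Young: "(1 + d / z) powr e \<le> 1 + e * (d / z)"
    by (simp add: algebra_simps)
  have "z + d = z * (1 + d / z)"
    using z by (simp add: field_simps)
  then have "(z + d) powr e = z powr e * (1 + d / z) powr e"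
    using z dz by (simp add: powr_mult)
  also have "\<dots> \<le> z powr e * (1 + e * (d / z))"
    using Young by (intro mult_left_mono) auto
  also have "\<dots> = z powr e + e * d * z powr (e - 1)"
    using z by (simp add: powr_diff field_simps)
  also have "e * d * z powr (e - 1) \<le> e * d * 1"
    using z d e powr_mono2'[of "e - 1" 1 z] by (intro mult_left_mono) auto
  also have "e * d * 1 \<le> d"
    using e d by (simp add: mult_left_le_one_le)
  finally show ?thesis
    by simp
qed

lemma abs_one_plus_powr_diff_le:
  fixes s r e :: real
  assumes "s \<ge> 0" and "r \<ge> 0" and e: "0 < e" "e \<le> 1"
  shows "\<bar>(1 + s) powr e - (1 + r) powr e\<bar> \<le> min \<bar>s - r\<bar> (\<bar>s - r\<bar> powr e)"
proof -
  have ordered: "\<bar>(1 + s) powr e - (1 + r) powr e\<bar> \<le> min \<bar>s - r\<bar> (\<bar>s - r\<bar> powr e)"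
    if "0 \<le> r" "r \<le> s" for s r :: real
  proof -
    have "1 + s = (1 + r) + (s - r)"
      by simp
    then have "(1 + s) powr e - (1 + r) powr e \<le> s - r"
      and "(1 + s) powr e - (1 + r) powr e \<le> (s - r) powr e"
      using that e powr_add_minus_powr_le[of "1 + r" "s - r" e]
        powr_add_le_add_powr[of "1 + r" "s - r" e] by simp_all
    moreover have "(1 + r) powr e \<le> (1 + s) powr e"
      using that e by (intro powr_mono2) auto
    ultimately show ?thesis
      using that by simp
  qed
  show ?thesis
    using ordered[of r s] ordered[of s r] assms by (cases "r \<le> s") (auto simp: abs_minus_commute)
qed

lemma min_powr_mono:
  fixes d d' e :: real
  assumes "0 \<le> d" and "d \<le> d'" and "0 < e"
  shows "min d (d powr e) \<le> min d' (d' powr e)"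
  using assms powr_mono2[of e d d'] by (auto simp: min_def)

definition powr_tail :: "real \<Rightarrow> real \<Rightarrow> real \<Rightarrow> real" where
  "powr_tail e r x = max 0 ((1 + \<bar>x\<bar>) powr e - (1 + r) powr e)"

lemma powr_tail_nonneg: "0 \<le> powr_tail e r x"
  by (simp add: powr_tail_def)

lemma measurable_powr_tail [measurable]: "powr_tail e r \<in> borel_measurable borel"
  unfolding powr_tail_def by measurable

lemma one_plus_abs_powr_lipschitz:
  fixes x y e :: real
  assumes "0 < e" and "e \<le> 1"
  shows "\<bar>(1 + \<bar>x\<bar>) powr e - (1 + \<bar>y\<bar>) powr e\<bar> \<le> min \<bar>x - y\<bar> (\<bar>x - y\<bar> powr e)"
proof -
  have "\<bar>(1 + \<bar>x\<bar>) powr e - (1 + \<bar>y\<bar>) powr e\<bar> \<le> min \<bar>\<bar>x\<bar> - \<bar>y\<bar>\<bar> (\<bar>\<bar>x\<bar> - \<bar>y\<bar>\<bar> powr e)"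
    by (rule abs_one_plus_powr_diff_le) (use assms in auto)
  also have "\<dots> \<le> min \<bar>x - y\<bar> (\<bar>x - y\<bar> powr e)"
    using assms by (intro min_powr_mono) auto
  finally show ?thesis .
qed

lemma powr_tail_in_H_eta: "0 < e \<Longrightarrow> e \<le> 1 \<Longrightarrow> powr_tail e r \<in> H_eta e"
  unfolding H_eta_def powr_tail_def
  using one_plus_abs_powr_lipschitz by (fastforce simp: max_def)

lemma one_plus_abs_powr_in_H_eta: "0 < e \<Longrightarrow> e \<le> 1 \<Longrightarrow> (\<lambda>x. (1 + \<bar>x\<bar>) powr e) \<in> H_eta e"
  unfolding H_eta_def using one_plus_abs_powr_lipschitz by blast

lemma bounded_lipschitz_scaled_in_H_eta:
  fixes \<phi> :: "real \<Rightarrow> real"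
  assumes \<phi>_bounded: "\<And>t. \<bar>\<phi> t\<bar> \<le> 1" and \<phi>_lipschitz: "\<And>s t. \<bar>\<phi> s - \<phi> t\<bar> \<le> L * \<bar>s - t\<bar>"
    and L: "L \<ge> 1" and e: "0 < e" "e \<le> 1"
  shows "(\<lambda>x. \<phi> x / (2 * L)) \<in> H_eta e"
  unfolding H_eta_def
proof safe
  fix x y :: real
  define d where "d = \<bar>x - y\<bar>"
  have "\<bar>\<phi> x - \<phi> y\<bar> / (2 * L) \<le> d / 2"
    using \<phi>_lipschitz[of x y] L by (simp add: d_def divide_le_eq field_simps)
  moreover have "\<bar>\<phi> x - \<phi> y\<bar> / (2 * L) \<le> 1"
    using \<phi>_bounded[of x] \<phi>_bounded[of y] L by (simp add: divide_le_eq)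
  moreover have "min d (d powr e) \<ge> min (d / 2) 1"
    using e self_le_powr[of d e] ge_one_powr_ge_zero[of d e] by (cases "d \<le> 1") (auto simp: d_def)
  ultimately have "\<bar>\<phi> x - \<phi> y\<bar> / (2 * L) \<le> min d (d powr e)"
    by linarith
  then show "\<bar>\<phi> x / (2 * L) - \<phi> y / (2 * L)\<bar> \<le> min \<bar>x - y\<bar> (\<bar>x - y\<bar> powr e)"
    using L by (simp add: d_def diff_divide_distrib[symmetric])
qed

lemma tail_le_powr_tail:
  fixes e r C\<^sub>1 C\<^sub>2 t :: real
  assumes e: "0 < e" "e \<le> 1" and r: "r \<ge> 0" and C: "C\<^sub>1 \<ge> 0" "C\<^sub>2 \<ge> 0"
  shows "(if 2 powr (1 / e) * (1 + r) < \<bar>t\<bar> then C\<^sub>1 * \<bar>t\<bar> powr e + C\<^sub>2 else 0)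
       \<le> (2 * C\<^sub>1 + C\<^sub>2) * powr_tail e r t"
proof (cases "2 powr (1 / e) * (1 + r) < \<bar>t\<bar>")
  case True
  have "2 * (1 + r) powr e = (2 powr (1 / e) * (1 + r)) powr e"
    using e r by (simp add: powr_mult powr_powr)
  also have "\<dots> < \<bar>t\<bar> powr e"
    using True e r by (intro powr_less_mono2) auto
  finally have "2 * (1 + r) powr e < \<bar>t\<bar> powr e" .
  moreover have "\<bar>t\<bar> powr e \<le> (1 + \<bar>t\<bar>) powr e"
    using e by (intro powr_mono2) auto
  moreover have "1 \<le> (1 + r) powr e"
    using r e by (intro ge_one_powr_ge_zero) auto
  ultimately have "\<bar>t\<bar> powr e \<le> 2 * powr_tail e r t" and "1 \<le> powr_tail e r t"
    by (auto simp: powr_tail_def)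
  then have "C\<^sub>1 * \<bar>t\<bar> powr e + C\<^sub>2 * 1 \<le> C\<^sub>1 * (2 * powr_tail e r t) + C\<^sub>2 * powr_tail e r t"
    using C by (intro add_mono mult_left_mono) auto
  then show ?thesis
    using True by (simp add: algebra_simps)
qed (use C powr_tail_nonneg in simp)

section \<open>Dirichlet processes with finitely many atoms\<close>

locale empirical_dirichlet_process =
  fixes N :: nat and a :: "nat \<Rightarrow> real" and c :: real
    and M :: "'a measure" and D :: "'a \<Rightarrow> real measure"
  assumes two_le_N: "2 \<le> N" and inj_a: "inj_on a {1..N}" and c_pos: "0 < c"
    and dp: "dirichlet_process M D c (empirical N a)"
begin

definition atoms :: "real set" where
  "atoms = a ` {1..N}"

definition weight :: "nat \<Rightarrow> 'a \<Rightarrow> real" where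
  "weight j \<omega> = measure (D \<omega>) {a j}"

lemma measurable_D [measurable]: "D \<in> measurable M (subprob_algebra borel)"
  using dp by (simp add: dirichlet_process_def)

sublocale M: prob_space M
  using dp by (simp add: dirichlet_process_def)

lemma prob_space_D: "\<omega> \<in> space M \<Longrightarrow> prob_space (D \<omega>)"
  using dp by (simp add: dirichlet_process_def)

lemma sets_D: "\<omega> \<in> space M \<Longrightarrow> sets (D \<omega>) = sets borel"
  using subprob_measurableD(2)[OF measurable_D] by simp

lemma finite_atoms: "finite atoms"
  by (simp add: atoms_def)

lemma atoms_closed: "- atoms \<in> sets borel"
  by (simp add: finite_atoms borel_closed finite_imp_closed)

lemma measure_empirical_atom: "j \<in> {1..N} \<Longrightarrow> measure (empirical N a) {a j} = 1 / N"
proof -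
  assume j: "j \<in> {1..N}"
  then have "{1..N} \<inter> a -` {a j} = {j}"
    using inj_a by (auto dest: inj_onD)
  then show ?thesis
    using two_le_N by (simp add: measure_empirical)
qed

lemma measure_empirical_compl_atoms: "measure (empirical N a) (- atoms) = 0"
proof -
  have "{1..N} \<inter> a -` (- atoms) = {}"
    by (auto simp: atoms_def)
  then show ?thesis
    using two_le_N atoms_closed by (simp add: measure_empirical)
qed

text \<open>\<open>D \<omega> (- atoms)\<close> is Beta-distributed with first parameter \<open>c * 0 = 0\<close>, so the Gamma variable in
  its numerator is degenerate at \<open>0\<close>.\<close>

lemma AE_measure_compl_atoms: "AE \<omega> in M. measure (D \<omega>) (- atoms) = 0"
proof -
  let ?f = "\<lambda>u::real. ennreal (indicator (- {0}) u)"
  let ?b = "c * measure (empirical N a) (- (- atoms))"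
  have "(\<integral>\<^sup>+\<omega>. ?f (measure (D \<omega>) (- atoms)) \<partial>M)
      = (\<integral>\<^sup>+g. (\<lambda>x y. ?f (x / (x + y))) (g 0) (g 1) \<partial>PiM {..<2::nat}
           (\<lambda>i. gamma_measure (c * measure (empirical N a) (if i = 0 then - atoms else - (- atoms)))))"
    using dirichlet_process_nn_integral_measure[OF dp atoms_closed, of ?f]
    by (simp add: numeral_2_eq_2)
  also have "\<dots> = (\<integral>\<^sup>+x. \<integral>\<^sup>+y. ?f (x / (x + y)) \<partial>gamma_measure ?b \<partial>return borel 0)"
    by (subst nn_integral_PiM_two_gamma)
      (simp_all add: measurable_split_conv measure_empirical_compl_atoms gamma_measure_def)
  also have "\<dots> = 0"
    by (subst nn_integral_return) auto
  finally have integral_0: "(\<integral>\<^sup>+\<omega>. ?f (measure (D \<omega>) (- atoms)) \<partial>M) = 0" .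
  have "(\<lambda>\<omega>. ?f (measure (D \<omega>) (- atoms))) \<in> borel_measurable M"
    using atoms_closed by measurable
  then have "AE \<omega> in M. ?f (measure (D \<omega>) (- atoms)) = 0"
    using integral_0 by (simp add: nn_integral_0_iff_AE)
  then show ?thesis
    by (auto simp: indicator_def elim: AE_mp)
qed

lemma measurable_weight [measurable]: "weight j \<in> borel_measurable M"
  unfolding weight_def by measurable

lemma weight_nonneg: "\<omega> \<in> space M \<Longrightarrow> 0 \<le> weight j \<omega>"
  by (simp add: weight_def)

lemma weight_le_1: "\<omega> \<in> space M \<Longrightarrow> weight j \<omega> \<le> 1"
  unfolding weight_def using prob_space.prob_le_1[OF prob_space_D] by auto

lemma AE_weights:
  "AE \<omega> in M. (\<Sum>j\<in>{1..N}. weight j \<omega>) = 1 \<and> (\<integral>x. x \<partial>D \<omega>) = (\<Sum>j\<in>{1..N}. a j * weight j \<omega>)"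
  using AE_measure_compl_atoms
proof (rule AE_mp, intro AE_I2 impI)
  fix \<omega>
  assume \<omega>: "\<omega> \<in> space M" and null: "measure (D \<omega>) (- atoms) = 0"
  have reindex: "(\<Sum>s\<in>atoms. g s) = (\<Sum>j\<in>{1..N}. g (a j))" for g :: "real \<Rightarrow> real"
    unfolding atoms_def using inj_a by (rule sum.reindex[unfolded comp_def])
  show "(\<Sum>j\<in>{1..N}. weight j \<omega>) = 1 \<and> (\<integral>x. x \<partial>D \<omega>) = (\<Sum>j\<in>{1..N}. a j * weight j \<omega>)"
    using prob_space_finite_support[OF prob_space_D[OF \<omega>] sets_D[OF \<omega>] _ null, of "\<lambda>x. x"]
    by (simp add: reindex weight_def finite_atoms)
qed

lemma nn_integral_weight:
  assumes j: "j \<in> {1..N}" and [measurable]: "f \<in> borel_measurable borel"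
  shows "(\<integral>\<^sup>+\<omega>. f (weight j \<omega>) \<partial>M)
       = (\<integral>\<^sup>+g. f (g 0 / (\<Sum>j<2. g j))
            \<partial>PiM {..<2::nat} (\<lambda>i. gamma_measure (if i = 0 then c / N else c - c / N)))"
proof -
  have "measure (empirical N a) (- {a j}) = 1 - 1 / N"
    using j prob_space.prob_compl[OF prob_space_empirical, of "{a j}" N a]
    by (simp add: measure_empirical_atom Compl_eq_Diff_UNIV)
  then have "c * measure (empirical N a) (if i = 0 then {a j} else - {a j})
      = (if i = 0 then c / N else c - c / N)" for i :: nat
    using j by (simp add: measure_empirical_atom right_diff_distrib)
  then show ?thesis
    unfolding weight_def using dirichlet_process_nn_integral_measure[OF dp, of "{a j}" f] by simp
qed

lemma integrable_weight: "integrable M (weight j)"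
  using weight_nonneg weight_le_1 by (intro M.integrable_const_bound[where B = 1]) auto

lemma integrable_weight_powr: "e \<ge> 0 \<Longrightarrow> integrable M (\<lambda>\<omega>. weight j \<omega> powr e)"
  using weight_nonneg weight_le_1 by (intro M.integrable_const_bound[where B = 1] AE_I2) (auto intro: powr_le1)

lemma integrable_weight_one_minus_weight: "integrable M (\<lambda>\<omega>. weight j \<omega> * (1 - weight j \<omega>))"
  using weight_nonneg weight_le_1
  by (intro M.integrable_const_bound[where B = 1]) (auto simp: abs_mult mult_le_one)

lemma integral_weight:
  assumes j: "j \<in> {1..N}"
  shows "(\<integral>\<omega>. weight j \<omega> \<partial>M) = 1 / N"
proof -
  define E where "E = (\<integral>\<^sup>+g. ennreal (g 0 / (\<Sum>j<2. g j))
      \<partial>PiM {..<2::nat} (\<lambda>i. gamma_measure (if i = 0 then c / N else c - c / N)))"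
  have same_law: "(\<integral>\<omega>. weight i \<omega> \<partial>M) = enn2real E" if "i \<in> {1..N}" for i
  proof -
    have "(\<integral>\<omega>. weight i \<omega> \<partial>M) = enn2real (\<integral>\<^sup>+\<omega>. ennreal (weight i \<omega>) \<partial>M)"
      by (rule integral_eq_nn_integral) (auto intro!: AE_I2 simp: weight_nonneg)
    then show ?thesis
      unfolding E_def using nn_integral_weight[OF that, of ennreal] by simp
  qed
  have "1 = (\<integral>\<omega>. (\<Sum>i\<in>{1..N}. weight i \<omega>) \<partial>M)"
    using AE_weights by (subst integral_cong_AE[where g = "\<lambda>_. 1"]) (auto elim: AE_mp simp: M.prob_space)
  also have "\<dots> = (\<Sum>i\<in>{1..N}. \<integral>\<omega>. weight i \<omega> \<partial>M)"
    by (rule Bochner_Integration.integral_sum) (rule integrable_weight)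
  also have "\<dots> = N * enn2real E"
    by (simp add: same_law)
  finally show ?thesis
    using two_le_N same_law[OF j] by (simp add: field_simps)
qed

lemma beta_parameters:
  "0 < c / N" "0 < c - c / N" "c / N + (c - c / N) = c"
proof -
  have "real N \<ge> 2"
    using two_le_N by simp
  then show "0 < c / N" "0 < c - c / N" "c / N + (c - c / N) = c"
    using c_pos by (auto simp: field_simps)
qed

lemma integral_weight_one_minus_weight_le:
  assumes j: "j \<in> {1..N}" and c_le_1: "c \<le> 1"
  shows "(\<integral>\<omega>. weight j \<omega> * (1 - weight j \<omega>) \<partial>M) \<le> 2 * c / N"
proof (rule integral_le_if_nn_integral_le)
  define \<alpha> where "\<alpha> i = (if i = 0 then c / N else c - c / N)" for i :: nat
  have \<alpha>: "\<alpha> 0 > 0" "\<alpha> 1 > 0" "\<alpha> 0 + \<alpha> 1 = c"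
    using beta_parameters by (simp_all add: \<alpha>_def)
  have Gamma_succ: "Gamma (\<alpha> i + 1) = \<alpha> i * Gamma (\<alpha> i)" if "i \<le> 1" for i
    using that \<alpha> by (intro Gamma_plus1) (auto simp: le_Suc_eq dest: nonpos_Ints_nonpos)
  have "(\<integral>\<^sup>+\<omega>. ennreal (weight j \<omega> * (1 - weight j \<omega>)) \<partial>M)
      = (\<integral>\<^sup>+g. ennreal (g 0 / (\<Sum>j<2. g j) * (1 - g 0 / (\<Sum>j<2. g j)))
           \<partial>PiM {..<2::nat} (\<lambda>i. gamma_measure (\<alpha> i)))"
    unfolding \<alpha>_def using nn_integral_weight[OF j, of "\<lambda>u. ennreal (u * (1 - u))"] by simp
  also have "\<dots> \<le> ennreal (Gamma (\<alpha> 0 + 1) * Gamma (\<alpha> 1 + 1) / (Gamma (\<alpha> 0) * Gamma (\<alpha> 1) * Gamma (1 + 1))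
      * (1 / (1 + 1) + 1 / (\<alpha> 0 + \<alpha> 1)))"
  proof (rule nn_integral_beta_moment_le[where f = "\<lambda>u. ennreal (u * (1 - u))"])
    fix x y :: real
    assume "x > 0" "y > 0"
    then show "ennreal (x / (x + y) * (1 - x / (x + y))) = ennreal (x powr 1 * y powr 1 / (x + y) powr (1 + 1))"
      by (simp add: field_simps power2_eq_square powr_add)
  qed (use \<alpha> in auto)
  also have "\<dots> = ennreal (\<alpha> 0 * \<alpha> 1 * (1 / 2 + 1 / c))"
  proof -
    have "Gamma (\<alpha> 0) \<noteq> 0" "Gamma (\<alpha> 1) \<noteq> 0"
      using Gamma_real_pos[OF \<alpha>(1)] Gamma_real_pos[OF \<alpha>(2)] by simp_all
    moreover have "Gamma (1 + 1 :: real) = 1"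
      using Gamma_fact[of 1] by simp
    ultimately show ?thesis
      using \<alpha> Gamma_succ[of 0] Gamma_succ[of 1] by (simp add: field_simps)
  qed
  also have "\<dots> \<le> ennreal (2 * c / N)"
  proof (rule ennreal_leI)
    have "\<alpha> 0 * \<alpha> 1 * (1 / 2 + 1 / c) \<le> \<alpha> 0 * c * (1 / 2 + 1 / c)"
      using \<alpha> c_pos by (intro mult_right_mono mult_left_mono) auto
    also have "\<dots> = (c / 2 + 1) * c / N"
      using c_pos two_le_N by (simp add: \<alpha>_def field_simps)
    also have "\<dots> \<le> 2 * c / N"
      using c_pos c_le_1 by (intro divide_right_mono) auto
    finally show "\<alpha> 0 * \<alpha> 1 * (1 / 2 + 1 / c) \<le> 2 * c / N" .
  qed
  finally show "(\<integral>\<^sup>+\<omega>. ennreal (weight j \<omega> * (1 - weight j \<omega>)) \<partial>M) \<le> ennreal (2 * c / N)" .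
qed (use weight_nonneg weight_le_1 c_pos in auto)

lemma integral_weight_powr_le:
  assumes j: "j \<in> {1..N}" and e: "e > 0" and c_le_1: "c \<le> 1"
    and K: "\<And>s. 0 < s \<Longrightarrow> s \<le> 1 \<Longrightarrow> Gamma (s + e) / Gamma s \<le> K * s"
  shows "(\<integral>\<omega>. weight j \<omega> powr e \<partial>M) \<le> K * (1 / e + 1) / Gamma e / N"
proof -
  define \<alpha> where "\<alpha> i = (if i = 0 then c / N else c - c / N)" for i :: nat
  have \<alpha>: "\<alpha> 0 > 0" "\<alpha> 1 > 0" "\<alpha> 0 + \<alpha> 1 = c" "\<alpha> 0 \<le> 1"
    using beta_parameters c_le_1 by (auto simp: \<alpha>_def)
  have Ge: "Gamma e > 0"
    using e by (rule Gamma_real_pos)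
  have "0 < Gamma (1 + e)"
    using e by (intro Gamma_real_pos) simp
  then have K_nonneg: "K \<ge> 0"
    using K[of 1] by (simp add: add.commute)
  have "(\<integral>\<^sup>+\<omega>. ennreal (weight j \<omega> powr e) \<partial>M)
      = (\<integral>\<^sup>+g. ennreal ((g 0 / (\<Sum>j<2. g j)) powr e) \<partial>PiM {..<2::nat} (\<lambda>i. gamma_measure (\<alpha> i)))"
    unfolding \<alpha>_def using nn_integral_weight[OF j, of "\<lambda>u. ennreal (u powr e)"] by simp
  also have "\<dots> \<le> ennreal (Gamma (\<alpha> 0 + e) * Gamma (\<alpha> 1 + 0) / (Gamma (\<alpha> 0) * Gamma (\<alpha> 1) * Gamma (e + 0))
      * (1 / (e + 0) + 1 / (\<alpha> 0 + \<alpha> 1)))"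
  proof (rule nn_integral_beta_moment_le[where f = "\<lambda>u. ennreal (u powr e)"])
    fix x y :: real
    assume "x > 0" "y > 0"
    then show "ennreal ((x / (x + y)) powr e) = ennreal (x powr e * y powr 0 / (x + y) powr (e + 0))"
      by (simp add: powr_divide)
  qed (use \<alpha> e in auto)
  also have "\<dots> = ennreal (Gamma (\<alpha> 0 + e) / Gamma (\<alpha> 0) * ((1 / e + 1 / c) / Gamma e))"
    using \<alpha> Gamma_real_pos[of "\<alpha> 1"] by (simp add: field_simps less_imp_neq[symmetric])
  \<comment> \<open>\<open>\<Gamma>(s + e) / \<Gamma>(s) = O(s)\<close> at \<open>s = c / N\<close> produces the factor \<open>1 / N\<close>.\<close>
  also have "\<dots> \<le> ennreal (K * \<alpha> 0 * ((1 / e + 1 / c) / Gamma e))"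
    using K[of "\<alpha> 0"] \<alpha> e c_pos Ge by (intro ennreal_leI mult_right_mono) auto
  also have "\<dots> \<le> ennreal (K * (1 / e + 1) / Gamma e / N)"
  proof (rule ennreal_leI)
    have "K * \<alpha> 0 * ((1 / e + 1 / c) / Gamma e) = K * (c / e + 1) / Gamma e / N"
      using c_pos e Ge two_le_N by (simp add: \<alpha>_def field_simps less_imp_neq[symmetric])
    also have "\<dots> \<le> K * (1 / e + 1) / Gamma e / N"
      using K_nonneg c_le_1 e Ge
      by (intro divide_right_mono mult_left_mono add_right_mono) (auto simp: divide_right_mono)
    finally show "K * \<alpha> 0 * ((1 / e + 1 / c) / Gamma e) \<le> K * (1 / e + 1) / Gamma e / N" .
  qed
  finally have "(\<integral>\<^sup>+\<omega>. ennreal (weight j \<omega> powr e) \<partial>M) \<le> ennreal (K * (1 / e + 1) / Gamma e / N)" .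
  then show ?thesis
    using K_nonneg Ge e by (intro integral_le_if_nn_integral_le) auto
qed

lemma integral_jensen_gap_term_le:
  assumes j: "j \<in> {1..N}" and L: "L \<ge> 0" and R: "R \<ge> 0" and e: "0 < e" "e \<le> 1" and c_le_1: "c \<le> 1"
    and K: "\<And>s. 0 < s \<Longrightarrow> s \<le> 1 \<Longrightarrow> Gamma (s + e) / Gamma s \<le> K * s"
  shows "(\<integral>\<omega>. 2 * L * (if R < \<bar>a j\<bar> then weight j \<omega> powr e * \<bar>a j\<bar> powr e else 0)
              + 2 * L * R * (weight j \<omega> * (1 - weight j \<omega>))
              + 2 * (if R < \<bar>a j\<bar> then weight j \<omega> else 0) \<partial>M)
       \<le> ((if R < \<bar>a j\<bar> then 2 * L * (K * (1 / e + 1) / Gamma e) * \<bar>a j\<bar> powr e + 2 else 0)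
            + 4 * L * R * c) / N"
proof -
  have var: "2 * L * R * (\<integral>\<omega>. weight j \<omega> * (1 - weight j \<omega>) \<partial>M) \<le> 2 * L * R * (2 * c / N)"
    using L R integral_weight_one_minus_weight_le[OF j c_le_1] by (intro mult_left_mono) auto
  show ?thesis
  proof (cases "R < \<bar>a j\<bar>")
    case True
    have "2 * L * (\<integral>\<omega>. weight j \<omega> powr e \<partial>M) * \<bar>a j\<bar> powr e
        \<le> 2 * L * (K * (1 / e + 1) / Gamma e / N) * \<bar>a j\<bar> powr e"
      using L integral_weight_powr_le[OF j e(1) c_le_1 K] by (intro mult_right_mono mult_left_mono) auto
    then show ?thesis
      using True var integrable_weight_powr[of e j] integrable_weight_one_minus_weight integrable_weight
        integral_weight[OF j] e
      by (simp add: add_divide_distrib diff_divide_distrib)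
  next
    case False
    then show ?thesis
      using var integrable_weight_one_minus_weight by (simp add: add_divide_distrib)
  qed
qed

lemma integral_weighted_atoms:
  assumes "\<phi> \<in> borel_measurable borel"
  shows "(\<integral>\<omega>. (\<Sum>j\<in>{1..N}. weight j \<omega> * \<phi> (a j)) \<partial>M) = integral\<^sup>L (empirical N a) \<phi>"
proof -
  have "(\<integral>\<omega>. (\<Sum>j\<in>{1..N}. weight j \<omega> * \<phi> (a j)) \<partial>M) = (\<Sum>j\<in>{1..N}. \<phi> (a j) / N)"
    using integrable_weight integral_weight by (subst Bochner_Integration.integral_sum) auto
  also have "\<dots> = integral\<^sup>L (empirical N a) \<phi>"
    using two_le_N assms by (simp add: integral_empirical sum_divide_distrib)
  finally show ?thesis .
qed

lemma AE_random_mean_jensen_gap_le: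
  fixes \<phi> :: "real \<Rightarrow> real"
  assumes \<phi>_bounded: "\<And>t. \<bar>\<phi> t\<bar> \<le> 1" and \<phi>_lipschitz: "\<And>s t. \<bar>\<phi> s - \<phi> t\<bar> \<le> L * \<bar>s - t\<bar>"
    and L: "L \<ge> 1" and R: "R \<ge> 0" and e: "0 < e" "e \<le> 1"
  shows "AE \<omega> in M. \<bar>\<phi> (\<integral>x. x \<partial>D \<omega>) - (\<Sum>j\<in>{1..N}. weight j \<omega> * \<phi> (a j))\<bar>
           \<le> (\<Sum>j\<in>{1..N}. 2 * L * (if R < \<bar>a j\<bar> then weight j \<omega> powr e * \<bar>a j\<bar> powr e else 0)
                + 2 * L * R * (weight j \<omega> * (1 - weight j \<omega>))
                + 2 * (if R < \<bar>a j\<bar> then weight j \<omega> else 0))"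
  using AE_weights
proof (rule AE_mp, intro AE_I2 impI)
  fix \<omega>
  assume "\<omega> \<in> space M"
    and "(\<Sum>j\<in>{1..N}. weight j \<omega>) = 1 \<and> (\<integral>x. x \<partial>D \<omega>) = (\<Sum>j\<in>{1..N}. a j * weight j \<omega>)"
  then show "\<bar>\<phi> (\<integral>x. x \<partial>D \<omega>) - (\<Sum>j\<in>{1..N}. weight j \<omega> * \<phi> (a j))\<bar>
      \<le> (\<Sum>j\<in>{1..N}. 2 * L * (if R < \<bar>a j\<bar> then weight j \<omega> powr e * \<bar>a j\<bar> powr e else 0)
           + 2 * L * R * (weight j \<omega> * (1 - weight j \<omega>))
           + 2 * (if R < \<bar>a j\<bar> then weight j \<omega> else 0))"
    using bounded_lipschitz_jensen_gap_le[of "{1..N}" "\<lambda>j. weight j \<omega>" \<phi> L R e a]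
      weight_nonneg \<phi>_bounded \<phi>_lipschitz L R e
    by (simp add: sum.distrib sum_distrib_left mult.commute)
qed

lemma integral_jensen_gap_le:
  assumes L: "L \<ge> 0" and R: "R \<ge> 0" and e: "0 < e" "e \<le> 1" and c_le_1: "c \<le> 1"
    and K: "\<And>s. 0 < s \<Longrightarrow> s \<le> 1 \<Longrightarrow> Gamma (s + e) / Gamma s \<le> K * s"
  shows "integrable M (\<lambda>\<omega>. \<Sum>j\<in>{1..N}. 2 * L * (if R < \<bar>a j\<bar> then weight j \<omega> powr e * \<bar>a j\<bar> powr e else 0)
              + 2 * L * R * (weight j \<omega> * (1 - weight j \<omega>)) + 2 * (if R < \<bar>a j\<bar> then weight j \<omega> else 0))"
    and "(\<integral>\<omega>. (\<Sum>j\<in>{1..N}. 2 * L * (if R < \<bar>a j\<bar> then weight j \<omega> powr e * \<bar>a j\<bar> powr e else 0)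
              + 2 * L * R * (weight j \<omega> * (1 - weight j \<omega>)) + 2 * (if R < \<bar>a j\<bar> then weight j \<omega> else 0)) \<partial>M)
       \<le> integral\<^sup>L (empirical N a)
            (\<lambda>x. if R < \<bar>x\<bar> then 2 * L * (K * (1 / e + 1) / Gamma e) * \<bar>x\<bar> powr e + 2 else 0)
         + 4 * L * R * c"
proof -
  define tail where "tail x = (if R < \<bar>x\<bar> then 2 * L * (K * (1 / e + 1) / Gamma e) * \<bar>x\<bar> powr e + 2 else 0)"
    for x :: real
  define gap where "gap j \<omega> = 2 * L * (if R < \<bar>a j\<bar> then weight j \<omega> powr e * \<bar>a j\<bar> powr e else 0)
      + 2 * L * R * (weight j \<omega> * (1 - weight j \<omega>)) + 2 * (if R < \<bar>a j\<bar> then weight j \<omega> else 0)"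
    for j \<omega>
  have gap_integrable: "integrable M (gap j)" for j
    unfolding gap_def using e
    by (cases "R < \<bar>a j\<bar>")
      (auto intro!: Bochner_Integration.integrable_add integrable_mult_right integrable_mult_left
        integrable_weight_powr integrable_weight integrable_weight_one_minus_weight)
  then show "integrable M (\<lambda>\<omega>. \<Sum>j\<in>{1..N}. gap j \<omega>)"
    by (rule Bochner_Integration.integrable_sum)
  have "(\<integral>\<omega>. (\<Sum>j\<in>{1..N}. gap j \<omega>) \<partial>M) = (\<Sum>j\<in>{1..N}. \<integral>\<omega>. gap j \<omega> \<partial>M)"
    by (rule Bochner_Integration.integral_sum) (rule gap_integrable)
  also have "\<dots> \<le> (\<Sum>j\<in>{1..N}. (tail (a j) + 4 * L * R * c) / N)"
    unfolding gap_def tail_def using L R e c_le_1 K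
    by (intro sum_mono integral_jensen_gap_term_le) auto
  also have "\<dots> = integral\<^sup>L (empirical N a) tail + 4 * L * R * c"
  proof -
    have "tail \<in> borel_measurable borel"
      unfolding tail_def by measurable
    then show ?thesis
      using two_le_N integral_empirical[of N tail a]
      by (simp add: add_divide_distrib sum.distrib sum_divide_distrib[symmetric])
  qed
  finally show "(\<integral>\<omega>. (\<Sum>j\<in>{1..N}. gap j \<omega>) \<partial>M) \<le> integral\<^sup>L (empirical N a) tail + 4 * L * R * c" .
qed

lemma bounded_lipschitz_random_mean_le:
  fixes \<phi> :: "real \<Rightarrow> real"
  assumes [measurable]: "\<phi> \<in> borel_measurable borel" and \<phi>_bounded: "\<And>t. \<bar>\<phi> t\<bar> \<le> 1"
    and \<phi>_lipschitz: "\<And>s t. \<bar>\<phi> s - \<phi> t\<bar> \<le> L * \<bar>s - t\<bar>" and L: "L \<ge> 1" and R: "R \<ge> 0"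
    and e: "0 < e" "e \<le> 1" and c_le_1: "c \<le> 1"
    and K: "\<And>s. 0 < s \<Longrightarrow> s \<le> 1 \<Longrightarrow> Gamma (s + e) / Gamma s \<le> K * s"
  shows "\<bar>(\<integral>\<omega>. \<phi> (\<integral>x. x \<partial>D \<omega>) \<partial>M) - integral\<^sup>L (empirical N a) \<phi>\<bar>
       \<le> integral\<^sup>L (empirical N a)
            (\<lambda>x. if R < \<bar>x\<bar> then 2 * L * (K * (1 / e + 1) / Gamma e) * \<bar>x\<bar> powr e + 2 else 0)
         + 4 * L * R * c"
proof -
  define gap where "gap \<omega> = (\<Sum>j\<in>{1..N}. 2 * L * (if R < \<bar>a j\<bar> then weight j \<omega> powr e * \<bar>a j\<bar> powr e else 0)
      + 2 * L * R * (weight j \<omega> * (1 - weight j \<omega>)) + 2 * (if R < \<bar>a j\<bar> then weight j \<omega> else 0))"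
    for \<omega>
  define mixture where "mixture \<omega> = (\<Sum>j\<in>{1..N}. weight j \<omega> * \<phi> (a j))" for \<omega>
  have integrable: "integrable M mixture" "integrable M (\<lambda>\<omega>. \<phi> (\<integral>x. x \<partial>D \<omega>))" "integrable M gap"
    unfolding mixture_def gap_def using \<phi>_bounded integral_jensen_gap_le(1)[OF _ R e c_le_1 K] L
    by (auto intro!: Bochner_Integration.integrable_sum integrable_mult_left integrable_weight
        M.integrable_const_bound[where B = 1])
  have gap_AE: "AE \<omega> in M. \<bar>\<phi> (\<integral>x. x \<partial>D \<omega>) - mixture \<omega>\<bar> \<le> gap \<omega>"
    unfolding mixture_def gap_def using \<phi>_bounded \<phi>_lipschitz L R e
    by (rule AE_random_mean_jensen_gap_le)
  have mixture_integral: "(\<integral>\<omega>. mixture \<omega> \<partial>M) = integral\<^sup>L (empirical N a) \<phi>"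
    unfolding mixture_def by (rule integral_weighted_atoms) simp
  have "\<bar>(\<integral>\<omega>. \<phi> (\<integral>x. x \<partial>D \<omega>) \<partial>M) - integral\<^sup>L (empirical N a) \<phi>\<bar>
      = \<bar>\<integral>\<omega>. \<phi> (\<integral>x. x \<partial>D \<omega>) - mixture \<omega> \<partial>M\<bar>"
    using integrable by (simp add: mixture_integral[symmetric])
  also have "\<dots> \<le> (\<integral>\<omega>. \<bar>\<phi> (\<integral>x. x \<partial>D \<omega>) - mixture \<omega>\<bar> \<partial>M)"
    by (rule integral_abs_bound)
  also have "\<dots> \<le> (\<integral>\<omega>. gap \<omega> \<partial>M)"
    using gap_AE integrable by (intro integral_mono_AE) auto
  also have "\<dots> \<le> integral\<^sup>L (empirical N a)
            (\<lambda>x. if R < \<bar>x\<bar> then 2 * L * (K * (1 / e + 1) / Gamma e) * \<bar>x\<bar> powr e + 2 else 0)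
         + 4 * L * R * c"
    unfolding gap_def using L R e c_le_1 K by (intro integral_jensen_gap_le(2)) auto
  finally show ?thesis .
qed

lemma bounded_lipschitz_random_mean_law_le:
  fixes \<phi> :: "real \<Rightarrow> real"
  assumes [measurable]: "\<phi> \<in> borel_measurable borel" and \<phi>_bounded: "\<And>t. \<bar>\<phi> t\<bar> \<le> 1"
    and \<phi>_lipschitz: "\<And>s t. \<bar>\<phi> s - \<phi> t\<bar> \<le> L * \<bar>s - t\<bar>" and L: "L \<ge> 1"
    and e: "0 < e" "e \<le> 1" and c_le_1: "c \<le> 1" and K_pos: "K > 0"
    and K: "\<And>s. 0 < s \<Longrightarrow> s \<le> 1 \<Longrightarrow> Gamma (s + e) / Gamma s \<le> K * s" and r: "r \<ge> 0"
  shows "\<bar>integral\<^sup>L (random_mean_law M D) \<phi> - integral\<^sup>L (empirical N a) \<phi>\<bar>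
       \<le> (4 * L * (K * (1 / e + 1) / Gamma e) + 2) * integral\<^sup>L (empirical N a) (powr_tail e r)
         + 4 * L * (2 powr (1 / e) * (1 + r)) * c"
proof -
  define R where "R = 2 powr (1 / e) * (1 + r)"
  define C where "C = 2 * L * (K * (1 / e + 1) / Gamma e)"
  have C: "C \<ge> 0"
    using L K_pos e by (simp add: C_def)
  have "\<bar>integral\<^sup>L (random_mean_law M D) \<phi> - integral\<^sup>L (empirical N a) \<phi>\<bar>
      \<le> integral\<^sup>L (empirical N a) (\<lambda>x. if R < \<bar>x\<bar> then C * \<bar>x\<bar> powr e + 2 else 0) + 4 * L * R * c"
    unfolding integral_random_mean_law[OF dp assms(1)] C_def
    using assms R_def by (intro bounded_lipschitz_random_mean_le) auto
  also have "integral\<^sup>L (empirical N a) (\<lambda>x. if R < \<bar>x\<bar> then C * \<bar>x\<bar> powr e + 2 else 0)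
      \<le> (2 * C + 2) * integral\<^sup>L (empirical N a) (powr_tail e r)"
    using two_le_N e r C tail_le_powr_tail[of e r C 2]
    by (simp add: integral_empirical R_def sum_distrib_left divide_right_mono sum_mono)
  also have "2 * C + 2 = 4 * L * (K * (1 / e + 1) / Gamma e) + 2"
    by (simp add: C_def)
  finally show ?thesis
    unfolding R_def by simp
qed

end

section \<open>Convergence\<close>

lemma dW_lessD:
  assumes "dW e \<mu> \<nu> < ereal \<epsilon>" and h: "h \<in> H_eta e"
  shows "integrable \<mu> h" and "integrable \<nu> h" and "\<bar>integral\<^sup>L \<mu> h - integral\<^sup>L \<nu> h\<bar> < \<epsilon>"
proof -
  have integrable: "\<forall>h\<in>H_eta e. integrable \<mu> h \<and> integrable \<nu> h"
    using assms(1) by (auto simp: dW_def split: if_splits)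
  then show "integrable \<mu> h" and "integrable \<nu> h"
    using h by auto
  have "ereal \<bar>integral\<^sup>L \<mu> h - integral\<^sup>L \<nu> h\<bar> \<le> dW e \<mu> \<nu>"
    unfolding dW_def using integrable h by (auto intro: SUP_upper)
  also have "\<dots> < ereal \<epsilon>"
    by fact
  finally show "\<bar>integral\<^sup>L \<mu> h - integral\<^sup>L \<nu> h\<bar> < \<epsilon>"
    by simp
qed

lemma
  assumes "(\<lambda>n. dW e (\<mu> n) \<nu>) \<longlonglongrightarrow> 0" and h: "h \<in> H_eta e"
  shows tendsto_dW_imp_integrable: "integrable \<nu> h"
    and tendsto_dW_imp_tendsto_integral: "(\<lambda>n. integral\<^sup>L (\<mu> n) h) \<longlonglongrightarrow> integral\<^sup>L \<nu> h"
proof -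
  have small: "eventually (\<lambda>n. dW e (\<mu> n) \<nu> < ereal \<epsilon>) sequentially" if "\<epsilon> > 0" for \<epsilon>
    using order_tendstoD(2)[OF assms(1), of "ereal \<epsilon>"] that by (simp add: zero_ereal_def)
  obtain n where "dW e (\<mu> n) \<nu> < ereal 1"
    using small[of 1] unfolding eventually_sequentially by auto
  then show "integrable \<nu> h"
    using h by (rule dW_lessD)
  show "(\<lambda>n. integral\<^sup>L (\<mu> n) h) \<longlonglongrightarrow> integral\<^sup>L \<nu> h"
  proof (rule tendstoI)
    fix \<epsilon> :: real
    assume "\<epsilon> > 0"
    then have "eventually (\<lambda>n. dW e (\<mu> n) \<nu> < ereal \<epsilon>) sequentially"
      by (rule small)
    then show "eventually (\<lambda>n. dist (integral\<^sup>L (\<mu> n) h) (integral\<^sup>L \<nu> h) < \<epsilon>) sequentially"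
      by (rule eventually_mono) (use dW_lessD(3)[OF _ h] in \<open>simp add: dist_real_def\<close>)
  qed
qed

lemma tendsto_integral_powr_tail:
  assumes sets_\<rho>: "sets \<rho> = sets borel" and integrable: "integrable \<rho> (\<lambda>x. (1 + \<bar>x\<bar>) powr e)"
    and e: "e > 0"
  shows "(\<lambda>n. integral\<^sup>L \<rho> (powr_tail e (real n))) \<longlonglongrightarrow> 0"
proof -
  have "(\<lambda>n. integral\<^sup>L \<rho> (powr_tail e (real n))) \<longlonglongrightarrow> integral\<^sup>L \<rho> (\<lambda>x. 0)"
  proof (rule integral_dominated_convergence[where w = "\<lambda>x. (1 + \<bar>x\<bar>) powr e"])
    show "AE x in \<rho>. (\<lambda>n. powr_tail e (real n) x) \<longlonglongrightarrow> 0"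
    proof (intro AE_I2 tendsto_eventually eventually_sequentiallyI)
      fix x :: real and n :: nat
      assume "nat \<lceil>\<bar>x\<bar>\<rceil> \<le> n"
      then have "(1 + \<bar>x\<bar>) powr e \<le> (1 + real n) powr e"
        using e by (intro powr_mono2) auto
      then show "powr_tail e (real n) x = 0"
        by (simp add: powr_tail_def)
    qed
    show "AE x in \<rho>. norm (powr_tail e (real n) x) \<le> (1 + \<bar>x\<bar>) powr e" for n
      by (auto simp: powr_tail_def)
  qed (use sets_\<rho> integrable in simp_all)
  then show ?thesis
    by simp
qed

lemma strict_mono_on_atLeastAtMost_Suc:
  fixes a :: "nat \<Rightarrow> 'b::order"
  assumes "\<And>j. 1 \<le> j \<Longrightarrow> j < N \<Longrightarrow> a j < a (Suc j)"
  shows "strict_mono_on {1..N} a"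
proof (rule strict_mono_onI)
  fix i k
  assume "i \<in> {1..N}" "k \<in> {1..N}" "i < k"
  then have "1 \<le> i" "Suc i \<le> k" "k \<le> N"
    by auto
  from this(2,3) show "a i < a k"
  proof (induction k rule: dec_induct)
    case base
    then show ?case
      using assms \<open>1 \<le> i\<close> by simp
  next
    case (step n)
    then show ?case
      using assms[of n] \<open>1 \<le> i\<close> by (auto intro: order.strict_trans)
  qed
qed

lemma cts_step_bounded: "\<bar>cts_step a b t\<bar> \<le> 1"
  by (auto simp: cts_step_def field_simps)

lemma cts_step_lipschitz:
  assumes "a < b"
  shows "\<bar>cts_step a b s - cts_step a b t\<bar> \<le> max 1 (1 / (b - a)) * \<bar>s - t\<bar>"
proof -
  have "cts_step a b u = max 0 (min 1 ((b - u) / (b - a)))" for u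
    using assms by (auto simp: cts_step_def field_simps min_def max_def)
  then have "\<bar>cts_step a b s - cts_step a b t\<bar> \<le> \<bar>(b - s) / (b - a) - (b - t) / (b - a)\<bar>"
    by (auto simp: min_def max_def)
  also have "\<dots> = 1 / (b - a) * \<bar>s - t\<bar>"
    using assms by (simp add: diff_divide_distrib[symmetric] abs_divide field_simps)
  also have "\<dots> \<le> max 1 (1 / (b - a)) * \<bar>s - t\<bar>"
    by (intro mult_right_mono) auto
  finally show ?thesis .
qed

lemma tendsto_zero_by_approximation:
  fixes x :: "nat \<Rightarrow> real"
  assumes "\<And>n. eventually (\<lambda>N. \<bar>x N\<bar> \<le> u n N) sequentially" and "\<And>n. u n \<longlonglongrightarrow> U n" and "U \<longlonglongrightarrow> 0"
  shows "x \<longlonglongrightarrow> 0"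
proof (rule tendstoI)
  fix \<epsilon> :: real
  assume "\<epsilon> > 0"
  then obtain n where "U n < \<epsilon>"
    using order_tendstoD(2)[OF assms(3)] unfolding eventually_sequentially by blast
  then have "eventually (\<lambda>N. u n N < \<epsilon>) sequentially"
    by (rule order_tendstoD(2)[OF assms(2)])
  with assms(1)[of n] show "eventually (\<lambda>N. dist (x N) 0 < \<epsilon>) sequentially"
    by eventually_elim simp
qed

lemma empirical_dirichlet_processI:
  assumes "2 \<le> N" and "\<And>j. 1 \<le> j \<Longrightarrow> j < N \<Longrightarrow> a j < a (Suc j)" and "0 < c"
    and "dirichlet_process M D c (empirical N a)"
  shows "empirical_dirichlet_process N a c M D"
  using assms strict_mono_on_imp_inj_on[OF strict_mono_on_atLeastAtMost_Suc[of N a]]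
  by unfold_locales auto

lemma tendsto_bounded_lipschitz_random_mean_law:
  fixes \<rho> :: "real measure" and a :: "nat \<Rightarrow> nat \<Rightarrow> real" and c :: "nat \<Rightarrow> real"
    and M :: "nat \<Rightarrow> 'a measure" and D :: "nat \<Rightarrow> 'a \<Rightarrow> real measure" and \<phi> :: "real \<Rightarrow> real"
  assumes sets_\<rho>: "sets \<rho> = sets borel"
    and increasing: "\<And>N j. 1 \<le> j \<Longrightarrow> j < N \<Longrightarrow> a N j < a N (Suc j)"
    and e: "0 < e" "e \<le> 1" and dW: "(\<lambda>N. dW e (empirical N (a N)) \<rho>) \<longlonglongrightarrow> 0"
    and c_pos: "\<And>N. 1 \<le> N \<Longrightarrow> 0 < c N" and c: "c \<longlonglongrightarrow> 0"
    and dp: "\<And>N. 1 \<le> N \<Longrightarrow> dirichlet_process (M N) (D N) (c N) (empirical N (a N))"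
    and [measurable]: "\<phi> \<in> borel_measurable borel" and \<phi>_bounded: "\<And>t. \<bar>\<phi> t\<bar> \<le> 1"
    and \<phi>_lipschitz: "\<And>s t. \<bar>\<phi> s - \<phi> t\<bar> \<le> L * \<bar>s - t\<bar>" and L: "L \<ge> 1"
  shows "(\<lambda>N. integral\<^sup>L (random_mean_law (M N) (D N)) \<phi>) \<longlonglongrightarrow> integral\<^sup>L \<rho> \<phi>"
proof -
  obtain K where K_pos: "K > 0" and K: "\<And>s. 0 < s \<Longrightarrow> s \<le> 1 \<Longrightarrow> Gamma (s + e) / Gamma s \<le> K * s"
    using Gamma_ratio_le_linear[OF e(1)] by blast
  define A where "A = 4 * L * (K * (1 / e + 1) / Gamma e) + 2"
  define R where "R n = 2 powr (1 / e) * (1 + real n)" for n :: nat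
  have "(\<lambda>N. integral\<^sup>L (empirical N (a N)) (\<lambda>x. \<phi> x / (2 * L))) \<longlonglongrightarrow> integral\<^sup>L \<rho> (\<lambda>x. \<phi> x / (2 * L))"
    using dW bounded_lipschitz_scaled_in_H_eta[OF \<phi>_bounded \<phi>_lipschitz L e]
    by (rule tendsto_dW_imp_tendsto_integral)
  from tendsto_mult_right[OF this, of "2 * L"]
  have empirical: "(\<lambda>N. integral\<^sup>L (empirical N (a N)) \<phi>) \<longlonglongrightarrow> integral\<^sup>L \<rho> \<phi>"
    using L by simp
  have "(\<lambda>N. integral\<^sup>L (random_mean_law (M N) (D N)) \<phi> - integral\<^sup>L (empirical N (a N)) \<phi>) \<longlonglongrightarrow> 0"
  proof (rule tendsto_zero_by_approximation)
    show "eventually (\<lambda>N. \<bar>integral\<^sup>L (random_mean_law (M N) (D N)) \<phi> - integral\<^sup>L (empirical N (a N)) \<phi>\<bar>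
        \<le> A * integral\<^sup>L (empirical N (a N)) (powr_tail e n) + 4 * L * R n * c N) sequentially" for n
      using eventually_ge_at_top[of "2::nat"] order_tendstoD(2)[OF c zero_less_one]
    proof eventually_elim
      case (elim N)
      then show ?case
        unfolding A_def R_def using c_pos dp increasing \<phi>_bounded \<phi>_lipschitz L e K_pos K
        by (intro empirical_dirichlet_process.bounded_lipschitz_random_mean_law_le
            empirical_dirichlet_processI) auto
    qed
    show "(\<lambda>N. A * integral\<^sup>L (empirical N (a N)) (powr_tail e n) + 4 * L * R n * c N)
        \<longlonglongrightarrow> A * integral\<^sup>L \<rho> (powr_tail e n) + 4 * L * R n * 0" for n
      using dW powr_tail_in_H_eta[OF e] c
      by (intro tendsto_intros tendsto_dW_imp_tendsto_integral)
    show "(\<lambda>n. A * integral\<^sup>L \<rho> (powr_tail e n) + 4 * L * R n * 0) \<longlonglongrightarrow> 0"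
      using tendsto_integral_powr_tail[OF sets_\<rho> tendsto_dW_imp_integrable[OF dW one_plus_abs_powr_in_H_eta[OF e]] e(1)]
      by (simp add: tendsto_mult_right_zero)
  qed
  from tendsto_add[OF this empirical] show ?thesis
    by simp
qed

theorem proposition3p7:
  fixes \<rho> :: "real measure" and a :: "nat \<Rightarrow> nat \<Rightarrow> real" and \<beta> :: "nat \<Rightarrow> real"
    and \<eta> :: real and M :: "nat \<Rightarrow> 'a measure" and D :: "nat \<Rightarrow> 'a \<Rightarrow> real measure"
  assumes "prob_space \<rho>" and "sets \<rho> = sets borel"
    and "(\<integral>\<^sup>+x. ennreal (ln (1 + x\<^sup>2)) \<partial>\<rho>) < \<infinity>"
    and "\<And>N j. 1 \<le> j \<Longrightarrow> j < N \<Longrightarrow> a N j < a N (Suc j)"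
    and "0 < \<eta>" and "\<eta> < 1"
    and "(\<lambda>N. dW \<eta> (empirical N (a N)) \<rho>) \<longlonglongrightarrow> 0"
    and "\<And>N. 1 \<le> N \<Longrightarrow> 0 < \<beta> N"
    and "(\<lambda>N. real N * \<beta> N) \<longlonglongrightarrow> 0"
    and "\<And>N. 1 \<le> N \<Longrightarrow> dirichlet_process (M N) (D N) (real N * \<beta> N / 2) (empirical N (a N))"
  shows "weak_conv_m (\<lambda>N. random_mean_law (M N) (D N)) \<rho>"
proof -
  have c: "(\<lambda>N. real N * \<beta> N / 2) \<longlonglongrightarrow> 0"
    using assms(9) by (rule tendsto_divide_zero)
  have cts_step: "(\<lambda>N. integral\<^sup>L (random_mean_law (M N) (D N)) (cts_step x y)) \<longlonglongrightarrow> integral\<^sup>L \<rho> (cts_step x y)"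
    if "x < y" for x y
  proof (rule tendsto_bounded_lipschitz_random_mean_law[where c = "\<lambda>N. real N * \<beta> N / 2" and L = "max 1 (1 / (y - x))"])
    show "cts_step x y \<in> borel_measurable borel"
      unfolding cts_step_def by measurable
  qed (use assms(2,4,5,6,7,8,10) c cts_step_bounded cts_step_lipschitz[OF that] in auto)
  \<comment> \<open>Nothing is assumed about \<open>D 0\<close>, so the sequence is shifted by one.\<close>
  have "weak_conv_m (\<lambda>N. random_mean_law (M (Suc N)) (D (Suc N))) \<rho>"
  proof (rule integral_cts_step_conv_imp_weak_conv)
    show "real_distribution (random_mean_law (M (Suc n)) (D (Suc n)))" for n
      using assms(10)[of "Suc n"] by (simp add: real_distribution_random_mean_law)
    show "real_distribution \<rho>"
      using assms(1,2) by (simp add: real_distribution_def real_distribution_axioms_def)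
    show "(\<lambda>n. integral\<^sup>L (random_mean_law (M (Suc n)) (D (Suc n))) (cts_step x y))
        \<longlonglongrightarrow> integral\<^sup>L \<rho> (cts_step x y)" if "x < y" for x y
      using cts_step[OF that] by (rule LIMSEQ_Suc)
  qed
  then show ?thesis
    unfolding weak_conv_m_def weak_conv_def by (blast intro: LIMSEQ_imp_Suc)
qed

end
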